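(* Let $\Lambda$ be a finite, strongly connected $k$-graph, $y$ an $\mathbb{R}_+$-functor on $\Lambda$ and $\theta\in(0,\infty)$, such that condition (w-I) holds if $|\Lambda^0|=1$ and condition (w-II) holds otherwise. Define $d_{y,\theta}$ on $\Lambda^\infty\cong X_{\mathcal{B}_\Lambda}$ by $d_{y,\theta}(x,z)=1$ if $r(x)\ne r(z)$, $d_{y,\theta}(x,x)=0$, and $d_{y,\theta}(x,z)=w_{y,\theta}(x\wedge z)$ otherwise (equivalently $d_{y,\theta}(x,z)=\inf\{w_{y,\theta}(\lambda):\lambda\in F\mathcal{B}_\Lambda,\ x,z\in Z(\lambda)\}$ when $r(x)=r(z)$). Then $d_{y,\theta}$ is an ultrametric on $\Lambda^\infty$, and the topology it induces is the cylinder set topology.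
   Context: A $k$-graph is a countable small category $\Lambda$ with a degree functor $d:\Lambda\to\mathbb{N}^k$ satisfying unique factorization: if $d(\lambda)=m+n$ there are unique $\eta,\nu$ with $\lambda=\eta\nu$, $d(\eta)=m$, $d(\nu)=n$. $\Lambda^n=d^{-1}(n)$, $\Lambda^0$ = vertices, $r,s$ range/source, $v\Lambda^nw$ paths of degree $n$ from $w$ to $v$; $e_i$ standard basis; finite: each $\Lambda^n$ finite; strongly connected: $v\Lambda w\ne\emptyset$ for all vertices. An $\mathbb{R}_+$-functor is $y:\Lambda\to[0,\infty)$ with $y(v)=0$ on vertices and $y(\lambda\nu)=y(\lambda)+y(\nu)$ when $s(\lambda)=r(\nu)$. $B_i(y,\theta)_{v,w}=\sum_{\lambda\in v\Lambda^{e_i}w}e^{-\theta y(\lambda)}$; unique $\xi^{y,\theta}\in(0,\infty)^{\Lambda^0}$ with $\sum_v\xi^{y,\theta}_v=1$ and $B_i(y,\theta)\xi^{y,\theta}=\rho(B_i(y,\theta))\xi^{y,\theta}$ for all $i$ ($\rho$ = spectral radius); $\rho(B(y,\theta))^m=\prod_i\rho(B_i(y,\theta))^{m_i}$. Condition (w-I): $\rho(B_i(y,\theta))>1$ for all $i$. Condition (w-II): there is $i$ with $\rho(B_i(y,\theta))>\max_{v,w}B_i(y,\theta)_{v,w}$. Stationary $k$-Bratteli diagram $\mathcal{B}_\Lambda$: vertex sets $\mathcal{V}_n=\Lambda^0$; for $n\ge1$, $n\equiv i\pmod k$, $i\in\{1,\dots,k\}$, edge set $\mathcal{E}_n$ with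 one edge from $q\in\mathcal{V}_n$ to $p\in\mathcal{V}_{n-1}$ per $\lambda\in p\Lambda^{e_i}q$. Finite paths $f_1\cdots f_n$ ($f_j\in\mathcal{E}_j$, $s(f_j)=r(f_{j+1})$; length 0 = vertices of $\mathcal{V}_0$) form $F\mathcal{B}_\Lambda$ and are identified with morphisms $f_1\cdots f_n\in\Lambda$; infinite paths $f_1f_2\cdots$ form $X_{\mathcal{B}_\Lambda}$, with cylinder sets $Z(\lambda)$ (infinite paths with initial segment $\lambda$) generating the cylinder set topology; $r(x)=r(f_1)\in\mathcal{V}_0$. For $x\ne z$ with $r(x)=r(z)$, $x\wedge z$ is their longest common initial segment. $X_{\mathcal{B}_\Lambda}$ is naturally homeomorphic to the infinite path space $\Lambda^\infty$ (degree-preserving functors from $\Omega_k$ into $\Lambda$, topologized by cylinder sets), compatibly with cylinder sets. $w_{y,\theta}(\lambda)=e^{-y(\lambda)}\big(\rho(B(y,\theta))^{-d(\lambda)}\xi^{y,\theta}_{s(\lambda)}\big)^{1/\theta}$ for $\lambda\in F\mathcal{B}_\Lambda$. A metric $d$ is an ultrametric if $d(x,z)\le\max\{d(x,u),d(u,z)\}$ for all $x,z,u$. *)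

theory Defs
  imports "HOL-Analysis.Analysis"
begin

text \<open>A small category with morphism set mor, range rg, source sr, composition cmp
  (meaningful when sr l = rg n; cmp l n is "l n") and degree dg into N^k, where N^k is
  represented as functions nat => nat vanishing at all i >= k (coordinates 0..k-1).
  Objects are identified with the identity morphisms, i.e. the morphisms of degree 0.\<close>

record 'a kgraph =
  mor :: "'a set"
  rg  :: "'a \<Rightarrow> 'a"
  sr  :: "'a \<Rightarrow> 'a"
  cmp :: "'a \<Rightarrow> 'a \<Rightarrow> 'a"
  dg  :: "'a \<Rightarrow> nat \<Rightarrow> nat"

definition kvec :: "nat \<Rightarrow> (nat \<Rightarrow> nat) \<Rightarrow> bool" where
  "kvec k m \<longleftrightarrow> (\<forall>i\<ge>k. m i = 0)"

definition vadd :: "(nat \<Rightarrow> nat) \<Rightarrow> (nat \<Rightarrow> nat) \<Rightarrow> nat \<Rightarrow> nat" where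
  "vadd m n = (\<lambda>i. m i + n i)"

definition vsub :: "(nat \<Rightarrow> nat) \<Rightarrow> (nat \<Rightarrow> nat) \<Rightarrow> nat \<Rightarrow> nat" where
  "vsub n m = (\<lambda>i. n i - m i)"

definition vzero :: "nat \<Rightarrow> nat" where "vzero = (\<lambda>_. 0)"

definition ebas :: "nat \<Rightarrow> nat \<Rightarrow> nat" where
  "ebas i = (\<lambda>j. if j = i then 1 else 0)"

definition vertices :: "'a kgraph \<Rightarrow> 'a set" where
  "vertices G = {v \<in> mor G. dg G v = vzero}"

definition is_kgraph :: "nat \<Rightarrow> 'a kgraph \<Rightarrow> bool" where
  "is_kgraph k G \<longleftrightarrow>
     0 < k \<and> countable (mor G) \<and>
     (\<forall>l\<in>mor G. kvec k (dg G l)) \<and>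
     (\<forall>l\<in>mor G. rg G l \<in> vertices G \<and> sr G l \<in> vertices G) \<and>
     (\<forall>v\<in>vertices G. rg G v = v \<and> sr G v = v) \<and>
     (\<forall>l\<in>mor G. cmp G (rg G l) l = l \<and> cmp G l (sr G l) = l) \<and>
     (\<forall>l\<in>mor G. \<forall>n\<in>mor G. sr G l = rg G n \<longrightarrow>
        cmp G l n \<in> mor G \<and> rg G (cmp G l n) = rg G l \<and> sr G (cmp G l n) = sr G n \<and>
        dg G (cmp G l n) = vadd (dg G l) (dg G n)) \<and>
     (\<forall>l\<in>mor G. \<forall>n\<in>mor G. \<forall>p\<in>mor G. sr G l = rg G n \<and> sr G n = rg G p \<longrightarrow>
        cmp G (cmp G l n) p = cmp G l (cmp G n p)) \<and>
     (\<forall>l\<in>mor G. \<forall>m n. kvec k m \<and> kvec k n \<and> dg G l = vadd m n \<longrightarrow>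
        (\<exists>!(e, f). e \<in> mor G \<and> f \<in> mor G \<and> sr G e = rg G f \<and> l = cmp G e f \<and>
                   dg G e = m \<and> dg G f = n))"

definition finite_kgraph :: "nat \<Rightarrow> 'a kgraph \<Rightarrow> bool" where
  "finite_kgraph k G \<longleftrightarrow> (\<forall>n. finite {l \<in> mor G. dg G l = n})"

definition strongly_connected :: "'a kgraph \<Rightarrow> bool" where
  "strongly_connected G \<longleftrightarrow>
     (\<forall>v\<in>vertices G. \<forall>w\<in>vertices G. \<exists>l\<in>mor G. rg G l = v \<and> sr G l = w)"

definition Rplus_functor :: "'a kgraph \<Rightarrow> ('a \<Rightarrow> real) \<Rightarrow> bool" where
  "Rplus_functor G y \<longleftrightarrow>
     (\<forall>l\<in>mor G. y l \<ge> 0) \<and> (\<forall>v\<in>vertices G. y v = 0) \<and>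
     (\<forall>l\<in>mor G. \<forall>n\<in>mor G. sr G l = rg G n \<longrightarrow> y (cmp G l n) = y l + y n)"

definition Bmat :: "'a kgraph \<Rightarrow> ('a \<Rightarrow> real) \<Rightarrow> real \<Rightarrow> nat \<Rightarrow> 'a \<Rightarrow> 'a \<Rightarrow> real" where
  "Bmat G y \<theta> i v w =
     (\<Sum>l\<in>{l \<in> mor G. dg G l = ebas i \<and> rg G l = v \<and> sr G l = w}. exp (- \<theta> * y l))"

definition specrad :: "'v set \<Rightarrow> ('v \<Rightarrow> 'v \<Rightarrow> real) \<Rightarrow> real" where
  "specrad V A = Sup {cmod c | c. \<exists>x :: 'v \<Rightarrow> complex. (\<exists>p\<in>V. x p \<noteq> 0) \<and>
       (\<forall>p\<in>V. (\<Sum>q\<in>V. complex_of_real (A p q) * x q) = c * x p)}"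

definition rhoB :: "'a kgraph \<Rightarrow> ('a \<Rightarrow> real) \<Rightarrow> real \<Rightarrow> nat \<Rightarrow> real" where
  "rhoB G y \<theta> i = specrad (vertices G) (Bmat G y \<theta> i)"

definition xivec :: "nat \<Rightarrow> 'a kgraph \<Rightarrow> ('a \<Rightarrow> real) \<Rightarrow> real \<Rightarrow> 'a \<Rightarrow> real" where
  "xivec k G y \<theta> = (THE \<xi>. (\<forall>v\<in>vertices G. \<xi> v > 0) \<and> (\<forall>v. v \<notin> vertices G \<longrightarrow> \<xi> v = 0) \<and>
      (\<Sum>v\<in>vertices G. \<xi> v) = 1 \<and>
      (\<forall>i<k. \<forall>p\<in>vertices G. (\<Sum>q\<in>vertices G. Bmat G y \<theta> i p q * \<xi> q) = rhoB G y \<theta> i * \<xi> p))"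

definition cond_wI :: "nat \<Rightarrow> 'a kgraph \<Rightarrow> ('a \<Rightarrow> real) \<Rightarrow> real \<Rightarrow> bool" where
  "cond_wI k G y \<theta> \<longleftrightarrow> (\<forall>i<k. rhoB G y \<theta> i > 1)"

definition cond_wII :: "nat \<Rightarrow> 'a kgraph \<Rightarrow> ('a \<Rightarrow> real) \<Rightarrow> real \<Rightarrow> bool" where
  "cond_wII k G y \<theta> \<longleftrightarrow> (\<exists>i<k. rhoB G y \<theta> i >
      Max {Bmat G y \<theta> i v w | v w. v \<in> vertices G \<and> w \<in> vertices G})"

definition wyt :: "nat \<Rightarrow> 'a kgraph \<Rightarrow> ('a \<Rightarrow> real) \<Rightarrow> real \<Rightarrow> 'a \<Rightarrow> real" where
  "wyt k G y \<theta> l = exp (- y l) *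
     ((\<Prod>i<k. inverse (rhoB G y \<theta> i ^ dg G l i)) * xivec k G y \<theta> (sr G l)) powr (1 / \<theta>)"

text \<open>Degree-preserving functors Omega_k -> Lambda; a morphism of Omega_k is a pair (m,n)
  with m <= n in N^k; x is represented as a curried function, undefined off Omega_k.\<close>
definition infpaths :: "nat \<Rightarrow> 'a kgraph \<Rightarrow> ((nat \<Rightarrow> nat) \<Rightarrow> (nat \<Rightarrow> nat) \<Rightarrow> 'a) set" where
  "infpaths k G = {x.
     (\<forall>m n. kvec k m \<and> kvec k n \<and> m \<le> n \<longrightarrow> x m n \<in> mor G \<and> dg G (x m n) = vsub n m) \<and>
     (\<forall>m n p. kvec k m \<and> kvec k n \<and> kvec k p \<and> m \<le> n \<and> n \<le> p \<longrightarrow>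
         sr G (x m n) = rg G (x n p) \<and> cmp G (x m n) (x n p) = x m p) \<and>
     (\<forall>m n. \<not> (kvec k m \<and> kvec k n \<and> m \<le> n) \<longrightarrow> x m n = undefined)}"

definition prange :: "((nat \<Rightarrow> nat) \<Rightarrow> (nat \<Rightarrow> nat) \<Rightarrow> 'a) \<Rightarrow> 'a" where
  "prange x = x vzero vzero"

definition cylinder :: "nat \<Rightarrow> 'a kgraph \<Rightarrow> 'a \<Rightarrow> ((nat \<Rightarrow> nat) \<Rightarrow> (nat \<Rightarrow> nat) \<Rightarrow> 'a) set" where
  "cylinder k G l = {x \<in> infpaths k G. x vzero (dg G l) = l}"

definition cylinder_topology :: "nat \<Rightarrow> 'a kgraph \<Rightarrow> ((nat \<Rightarrow> nat) \<Rightarrow> (nat \<Rightarrow> nat) \<Rightarrow> 'a) topology" where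
  "cylinder_topology k G = topology_generated_by {cylinder k G l | l. l \<in> mor G}"

text \<open>Degree of a finite Bratteli path of length n: its j-th edge (j = 1..n) has degree
  e_i with i = j mod k in {1..k}, i.e. 0-indexed coordinate (j-1) mod k.\<close>
definition bdeg :: "nat \<Rightarrow> nat \<Rightarrow> nat \<Rightarrow> nat" where
  "bdeg k n = (\<lambda>i. if i < k then n div k + (if i < n mod k then 1 else 0) else 0)"

text \<open>the initial segment of length n of the Bratteli path corresponding to x\<close>
definition bseg :: "nat \<Rightarrow> ((nat \<Rightarrow> nat) \<Rightarrow> (nat \<Rightarrow> nat) \<Rightarrow> 'a) \<Rightarrow> nat \<Rightarrow> 'a" where
  "bseg k x n = x vzero (bdeg k n)"

definition pmeet :: "nat \<Rightarrow> ((nat \<Rightarrow> nat) \<Rightarrow> (nat \<Rightarrow> nat) \<Rightarrow> 'a)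
     \<Rightarrow> ((nat \<Rightarrow> nat) \<Rightarrow> (nat \<Rightarrow> nat) \<Rightarrow> 'a) \<Rightarrow> 'a" where
  "pmeet k x z = bseg k x (GREATEST n. bseg k x n = bseg k z n)"

text \<open>d_{y,theta} is only meaningful on the infinite path space; off it we set it to 0
  so that it is a total symmetric nonnegative function (as required by Metric_space).\<close>
definition dyt :: "nat \<Rightarrow> 'a kgraph \<Rightarrow> ('a \<Rightarrow> real) \<Rightarrow> real
     \<Rightarrow> ((nat \<Rightarrow> nat) \<Rightarrow> (nat \<Rightarrow> nat) \<Rightarrow> 'a) \<Rightarrow> ((nat \<Rightarrow> nat) \<Rightarrow> (nat \<Rightarrow> nat) \<Rightarrow> 'a) \<Rightarrow> real" where
  "dyt k G y \<theta> x z =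
     (if x \<notin> infpaths k G \<or> z \<notin> infpaths k G then 0
      else if prange x \<noteq> prange z then 1 else if x = z then 0 else wyt k G y \<theta> (pmeet k x z))"

definition is_ultrametric :: "'b set \<Rightarrow> ('b \<Rightarrow> 'b \<Rightarrow> real) \<Rightarrow> bool" where
  "is_ultrametric S D \<longleftrightarrow> Metric_space S D \<and>
     (\<forall>x\<in>S. \<forall>z\<in>S. \<forall>u\<in>S. D x z \<le> max (D x u) (D u z))"

end

theory Submission
  imports Defs
begin

text \<open>The matrices \<open>B_i(y, \<theta>)\<close> commute, since unique factorisation identifies pairs of
  composable edges of degrees \<open>e_i\<close>, \<open>e_j\<close> with paths of degree \<open>e_i + e_j\<close>, and their sum is
  irreducible by strong connectivity. Hence the Perron eigenvector of the sum is a common positive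
  eigenvector \<open>\<xi>\<close> of all \<open>B_i\<close>, with eigenvalues \<open>\<rho>(B_i)\<close>. For
  \<open>W(\<lambda>) = exp(-\<theta> y(\<lambda>)) \<rho>(B)^(-d(\<lambda>)) \<xi>(s(\<lambda>)) = w(\<lambda>)^\<theta>\<close> the eigenvector equation gives
  \<open>W(\<lambda> e) \<le> W(\<lambda>)\<close> for every edge \<open>e\<close>, so \<open>w\<close> decreases along every infinite path.
  As the meet of \<open>x\<close> and \<open>z\<close> is at least as long as the shorter of their meets with any third
  path, \<open>d\<close> is an ultrametric. Condition (w-I), resp. (w-II), bounds \<open>W(\<lambda>)\<close> by \<open>c^(d(\<lambda>)_i)\<close>
  with \<open>c < 1\<close>, so \<open>w\<close> tends to \<open>0\<close> along every path: every ball around \<open>x\<close> contains a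
  cylinder set of \<open>x\<close> and conversely.\<close>

section \<open>Perron--Frobenius theory for irreducible nonnegative matrices\<close>

definition mat_vec :: "'v set \<Rightarrow> ('v \<Rightarrow> 'v \<Rightarrow> real) \<Rightarrow> ('v \<Rightarrow> real) \<Rightarrow> 'v \<Rightarrow> real" where
  "mat_vec V a x p = (\<Sum>q\<in>V. a p q * x q)"

definition irreducible_on :: "'v set \<Rightarrow> ('v \<Rightarrow> 'v \<Rightarrow> real) \<Rightarrow> bool" where
  "irreducible_on V a \<longleftrightarrow>
     (\<forall>P. (\<forall>p\<in>V. \<forall>q\<in>V. a p q > 0 \<longrightarrow> P p \<longrightarrow> P q) \<longrightarrow> (\<exists>p\<in>V. P p) \<longrightarrow> (\<forall>q\<in>V. P q))"

definition simplex_on :: "'v set \<Rightarrow> ('v \<Rightarrow> real) set" where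
  "simplex_on V = {x. (\<forall>p\<in>V. 0 \<le> x p) \<and> (\<Sum>p\<in>V. x p) = 1}"

definition id_plus_mat_vec :: "'v set \<Rightarrow> ('v \<Rightarrow> 'v \<Rightarrow> real) \<Rightarrow> ('v \<Rightarrow> real) \<Rightarrow> 'v \<Rightarrow> real" where
  "id_plus_mat_vec V a v = (\<lambda>p. v p + mat_vec V a v p)"

lemma mat_vec_cong: "(\<And>q. q \<in> V \<Longrightarrow> u q = w q) \<Longrightarrow> mat_vec V a u p = mat_vec V a w p"
  unfolding mat_vec_def by simp

lemma mat_vec_lincomb:
  "mat_vec V a (\<lambda>q. \<alpha> * f q + \<beta> * g q) p = \<alpha> * mat_vec V a f p + \<beta> * mat_vec V a g p"
  unfolding mat_vec_def by (simp add: sum.distrib sum_distrib_left algebra_simps)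

lemma id_plus_pow_lincomb:
  "(id_plus_mat_vec V a ^^ N) (\<lambda>p. \<alpha> * f p + \<beta> * g p) =
     (\<lambda>p. \<alpha> * (id_plus_mat_vec V a ^^ N) f p + \<beta> * (id_plus_mat_vec V a ^^ N) g p)"
proof (induction N)
  case (Suc N)
  then show ?case
    by (simp add: id_plus_mat_vec_def mat_vec_lincomb algebra_simps)
qed simp

lemma mat_vec_id_plus_pow:
  "mat_vec V a ((id_plus_mat_vec V a ^^ N) v) = (id_plus_mat_vec V a ^^ N) (mat_vec V a v)"
proof (induction N)
  case (Suc N)
  have "mat_vec V a (id_plus_mat_vec V a u) = id_plus_mat_vec V a (mat_vec V a u)" for u
    using mat_vec_lincomb[of V a 1 u 1 "mat_vec V a u"] by (auto simp: id_plus_mat_vec_def)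
  then show ?case using Suc by simp
qed simp

lemma mat_vec_nonneg:
  assumes "finite V" "\<And>p q. p \<in> V \<Longrightarrow> q \<in> V \<Longrightarrow> 0 \<le> a p q" "\<And>q. q \<in> V \<Longrightarrow> 0 \<le> v q" "p \<in> V"
  shows "0 \<le> mat_vec V a v p"
  unfolding mat_vec_def using assms by (intro sum_nonneg) simp

lemma finite_bolzano_weierstrass:
  fixes x :: "nat \<Rightarrow> 'v \<Rightarrow> real"
  assumes "finite V" "\<And>n p. p \<in> V \<Longrightarrow> \<bar>x n p\<bar> \<le> B"
  obtains \<sigma> z where "strict_mono \<sigma>" "\<And>p. p \<in> V \<Longrightarrow> (\<lambda>n. x (\<sigma> n) p) \<longlonglongrightarrow> z p"
proof -
  have "\<exists>\<sigma> z. strict_mono \<sigma> \<and> (\<forall>p\<in>V. (\<lambda>n. x (\<sigma> n) p) \<longlonglongrightarrow> z p)"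
    using assms
  proof (induction V rule: finite_induct)
    case empty
    show ?case by (intro exI[of _ id]) (auto simp: strict_mono_def)
  next
    case (insert a V)
    then obtain \<sigma> z where \<sigma>: "strict_mono \<sigma>" and conv: "\<forall>p\<in>V. (\<lambda>n. x (\<sigma> n) p) \<longlonglongrightarrow> z p"
      by blast
    obtain f where f: "strict_mono f" "monoseq (\<lambda>n. x (\<sigma> (f n)) a)"
      using seq_monosub[of "\<lambda>n. x (\<sigma> n) a"] by blast
    have "Bseq (\<lambda>n. x (\<sigma> (f n)) a)"
      by (rule BseqI'[of _ B]) (use insert.prems in auto)
    then obtain l where l: "(\<lambda>n. x (\<sigma> (f n)) a) \<longlonglongrightarrow> l"
      using f(2) Bseq_monoseq_convergent convergent_def by blast
    have "(\<lambda>n. x ((\<sigma> \<circ> f) n) p) \<longlonglongrightarrow> (z(a := l)) p" if "p \<in> insert a V" for p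
    proof (cases "p = a")
      case False
      then have "((\<lambda>n. x (\<sigma> n) p) \<circ> f) \<longlonglongrightarrow> z p"
        using that conv f(1) by (intro LIMSEQ_subseq_LIMSEQ) auto
      then show ?thesis using False by (simp add: comp_def)
    qed (use l in simp)
    then show ?case using strict_mono_o[OF \<sigma> f(1)] by blast
  qed
  then show ?thesis using that by blast
qed

lemma cmod_eigval_le_pos_eigval:
  assumes fin: "finite V" and ne: "V \<noteq> {}"
    and nn: "\<And>p q. p \<in> V \<Longrightarrow> q \<in> V \<Longrightarrow> 0 \<le> a p q"
    and zpos: "\<And>p. p \<in> V \<Longrightarrow> 0 < z p"
    and ez: "\<And>p. p \<in> V \<Longrightarrow> mat_vec V a z p = c * z p"
    and x: "\<exists>p\<in>V. x p \<noteq> 0"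
    and eq: "\<And>p. p \<in> V \<Longrightarrow> (\<Sum>q\<in>V. complex_of_real (a p q) * x q) = ev * x p"
  shows "cmod ev \<le> c"
proof -
  define t where "t = Max ((\<lambda>p. cmod (x p) / z p) ` V)"
  have "t \<in> (\<lambda>p. cmod (x p) / z p) ` V" unfolding t_def using fin ne by (intro Max_in) auto
  then obtain p0 where p0: "p0 \<in> V" "t = cmod (x p0) / z p0" by blast
  have tge: "cmod (x p) \<le> t * z p" if "p \<in> V" for p
  proof -
    have "cmod (x p) / z p \<le> t" unfolding t_def using fin that by auto
    then show ?thesis using zpos[OF that] by (simp add: field_simps)
  qed
  obtain p2 where p2: "p2 \<in> V" "x p2 \<noteq> 0" using x by blast
  have "0 < cmod (x p2) / z p2" using p2 zpos[OF p2(1)] by simp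
  also have "\<dots> \<le> t" unfolding t_def using fin p2 by auto
  finally have pos: "0 < cmod (x p0)" using p0 zpos[OF p0(1)] by (simp add: field_simps)
  have "cmod ev * cmod (x p0) = cmod (\<Sum>q\<in>V. complex_of_real (a p0 q) * x q)"
    using eq[OF p0(1)] by (simp add: norm_mult)
  also have "\<dots> \<le> (\<Sum>q\<in>V. cmod (complex_of_real (a p0 q) * x q))" by (rule norm_sum)
  also have "\<dots> = (\<Sum>q\<in>V. a p0 q * cmod (x q))"
    by (rule sum.cong) (use nn p0 in \<open>auto simp: norm_mult\<close>)
  also have "\<dots> \<le> (\<Sum>q\<in>V. a p0 q * (t * z q))"
    by (rule sum_mono, rule mult_left_mono[OF tge]) (use nn p0 in auto)
  also have "\<dots> = t * mat_vec V a z p0"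
    unfolding mat_vec_def by (simp add: sum_distrib_left algebra_simps)
  also have "\<dots> = c * cmod (x p0)" using ez[OF p0(1)] p0 zpos[OF p0(1)] by simp
  finally show ?thesis using pos by simp
qed

lemma specrad_eq_pos_eigval:
  assumes fin: "finite V" and ne: "V \<noteq> {}"
    and nn: "\<And>p q. p \<in> V \<Longrightarrow> q \<in> V \<Longrightarrow> 0 \<le> a p q"
    and zpos: "\<And>p. p \<in> V \<Longrightarrow> 0 < z p"
    and ez: "\<And>p. p \<in> V \<Longrightarrow> mat_vec V a z p = c * z p"
  shows "specrad V a = c"
proof -
  let ?E = "{cmod e | e. \<exists>x :: _ \<Rightarrow> complex. (\<exists>p\<in>V. x p \<noteq> 0) \<and>
       (\<forall>p\<in>V. (\<Sum>q\<in>V. complex_of_real (a p q) * x q) = e * x p)}"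
  obtain p1 where p1: "p1 \<in> V" using ne by blast
  have "0 \<le> mat_vec V a z p1"
    using fin nn zpos p1 by (intro mat_vec_nonneg) (auto intro: less_imp_le)
  then have c0: "0 \<le> c" using ez[OF p1] zpos[OF p1] by (simp add: zero_le_mult_iff)
  have "(\<Sum>q\<in>V. complex_of_real (a p q) * complex_of_real (z q)) = complex_of_real c * complex_of_real (z p)"
    if "p \<in> V" for p
  proof -
    have "(\<Sum>q\<in>V. complex_of_real (a p q) * complex_of_real (z q)) = complex_of_real (mat_vec V a z p)"
      unfolding mat_vec_def by simp
    then show ?thesis using ez[OF that] by simp
  qed
  then have "\<exists>x :: _ \<Rightarrow> complex. (\<exists>p\<in>V. x p \<noteq> 0) \<and>
      (\<forall>p\<in>V. (\<Sum>q\<in>V. complex_of_real (a p q) * x q) = complex_of_real c * x p)"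
    using p1 zpos[OF p1] by (intro exI[of _ "\<lambda>p. complex_of_real (z p)"]) force
  moreover have "c = cmod (complex_of_real c)" using c0 by simp
  ultimately have "c \<in> ?E" by (intro CollectI exI[of _ "complex_of_real c"]) simp
  moreover have "e \<le> c" if "e \<in> ?E" for e
    using that cmod_eigval_le_pos_eigval[OF fin ne nn zpos ez] by blast
  ultimately show ?thesis unfolding specrad_def by (rule cSup_eq_maximum)
qed

lemma tendsto_subseq_approx_from_below:
  fixes t :: "nat \<Rightarrow> real"
  assumes "\<And>n. r - 1 / (real n + 1) < t n" "\<And>n. t n \<le> r" "strict_mono \<sigma>"
  shows "(\<lambda>n. t (\<sigma> n)) \<longlonglongrightarrow> r"
proof (rule tendsto_sandwich[of "\<lambda>n. r - 1 / (real n + 1)" _ _ "\<lambda>n. r"])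
  have "r - 1 / (real n + 1) \<le> t (\<sigma> n)" for n
  proof -
    have "1 / (real (\<sigma> n) + 1) \<le> 1 / (real n + 1)"
      using seq_suble[OF assms(3), of n] by (intro divide_left_mono) auto
    then show ?thesis using assms(1)[of "\<sigma> n"] by linarith
  qed
  then show "\<forall>\<^sub>F n in sequentially. r - 1 / (real n + 1) \<le> t (\<sigma> n)" by simp
  have "(\<lambda>n. 1 / (real n + 1)) \<longlonglongrightarrow> 0"
    using LIMSEQ_inverse_real_of_nat by (simp add: inverse_eq_divide add.commute)
  then show "(\<lambda>n. r - 1 / (real n + 1)) \<longlonglongrightarrow> r"
    using tendsto_diff[OF tendsto_const[of r]] by fastforce
qed (use assms(2) in auto)

lemma collatz_wielandt_limit:
  assumes fin: "finite V" and xS: "\<And>n. x n \<in> simplex_on V"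
    and sub: "\<And>n p. p \<in> V \<Longrightarrow> t n * x n p \<le> mat_vec V a (x n) p"
    and xz: "\<And>p. p \<in> V \<Longrightarrow> (\<lambda>n. x n p) \<longlonglongrightarrow> z p" and tr: "t \<longlonglongrightarrow> r"
  shows "z \<in> simplex_on V" and "\<And>p. p \<in> V \<Longrightarrow> r * z p \<le> mat_vec V a z p"
proof -
  have "0 \<le> z p" if "p \<in> V" for p
    using xz that xS by (intro LIMSEQ_le_const[of "\<lambda>n. x n p"]) (auto simp: simplex_on_def)
  moreover have "(\<lambda>n. \<Sum>p\<in>V. x n p) \<longlonglongrightarrow> (\<Sum>p\<in>V. z p)"
    using xz by (intro tendsto_sum) auto
  then have "(\<Sum>p\<in>V. z p) = 1" using xS by (simp add: simplex_on_def LIMSEQ_const_iff)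
  ultimately show "z \<in> simplex_on V" by (simp add: simplex_on_def)
  fix p assume p: "p \<in> V"
  have "(\<lambda>n. mat_vec V a (x n) p - t n * x n p) \<longlonglongrightarrow> mat_vec V a z p - r * z p"
    unfolding mat_vec_def using xz p tr by (intro tendsto_intros) auto
  then have "0 \<le> mat_vec V a z p - r * z p"
    using sub[OF p] by (intro LIMSEQ_le_const) auto
  then show "r * z p \<le> mat_vec V a z p" by simp
qed

lemma strict_subinvariance_margin:
  assumes fin: "finite V" and u: "\<And>q. q \<in> V \<Longrightarrow> 0 \<le> u q"
    and strict: "\<And>q. q \<in> V \<Longrightarrow> r * u q < mat_vec V a u q"
  obtains \<delta> where "0 < \<delta>" "\<And>q. q \<in> V \<Longrightarrow> (r + \<delta>) * u q \<le> mat_vec V a u q"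
proof (cases "V = {}")
  case False
  define \<delta> where "\<delta> = Min ((\<lambda>p. (mat_vec V a u p - r * u p) / (1 + u p)) ` V)"
  have "\<delta> \<in> (\<lambda>p. (mat_vec V a u p - r * u p) / (1 + u p)) ` V"
    unfolding \<delta>_def using fin False by (intro Min_in) auto
  then obtain p where p: "p \<in> V" "\<delta> = (mat_vec V a u p - r * u p) / (1 + u p)" by blast
  have "0 < \<delta>" unfolding p(2) using strict[OF p(1)] u[OF p(1)] by (intro divide_pos_pos) auto
  moreover have "(r + \<delta>) * u q \<le> mat_vec V a u q" if q: "q \<in> V" for q
  proof -
    have "\<delta> \<le> (mat_vec V a u q - r * u q) / (1 + u q)" unfolding \<delta>_def using fin q by auto
    then have "\<delta> * (1 + u q) \<le> mat_vec V a u q - r * u q"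
      using u[OF q] by (simp add: pos_le_divide_eq add_pos_nonneg)
    then show ?thesis using \<open>0 < \<delta>\<close> by (simp add: algebra_simps)
  qed
  ultimately show ?thesis using that by blast
qed (rule that[of 1]; simp)

locale irreducible_nonneg_matrix =
  fixes V :: "'v set" and a :: "'v \<Rightarrow> 'v \<Rightarrow> real"
  assumes finite: "finite V" and nonempty: "V \<noteq> {}"
    and nonneg: "\<And>p q. p \<in> V \<Longrightarrow> q \<in> V \<Longrightarrow> 0 \<le> a p q"
    and irreducible: "irreducible_on V a"
begin

text \<open>The zero set of such a vector is closed under the edges of the matrix.\<close>

lemma vanishing_everywhere:
  assumes u: "\<And>p. p \<in> V \<Longrightarrow> 0 \<le> u p"
    and closed: "\<And>p. p \<in> V \<Longrightarrow> u p = 0 \<Longrightarrow> mat_vec V a u p = 0"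
    and "p \<in> V" "u p = 0"
  shows "\<forall>q\<in>V. u q = 0"
proof -
  have "u q = 0" if "p \<in> V" "q \<in> V" "a p q > 0" "u p = 0" for p q
  proof -
    have "\<forall>q'\<in>V. a p q' * u q' = 0"
      using closed[OF that(1,4)] unfolding mat_vec_def
      by (subst sum_nonneg_eq_0_iff[symmetric]) (use finite nonneg u that in auto)
    then show ?thesis using that(2,3) by fastforce
  qed
  then show ?thesis
    using irreducible assms(3,4) unfolding irreducible_on_def
    by (elim allE[where x="\<lambda>q. u q = 0"]) blast
qed

lemma eigvec_proportional:
  assumes zpos: "\<And>p. p \<in> V \<Longrightarrow> 0 < z p"
    and ez: "\<And>p. p \<in> V \<Longrightarrow> mat_vec V a z p = r * z p"
    and ev: "\<And>p. p \<in> V \<Longrightarrow> mat_vec V a v p = r * v p"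
  shows "\<exists>t. \<forall>p\<in>V. v p = t * z p"
proof -
  define t where "t = Min ((\<lambda>p. v p / z p) ` V)"
  have "t \<in> (\<lambda>p. v p / z p) ` V" unfolding t_def using finite nonempty by (intro Min_in) auto
  then obtain p0 where p0: "p0 \<in> V" "t = v p0 / z p0" by blast
  define u where "u = (\<lambda>p. v p - t * z p)"
  have u0: "0 \<le> u p" if "p \<in> V" for p
  proof -
    have "t \<le> v p / z p" unfolding t_def using finite that by auto
    then show ?thesis using zpos[OF that] by (simp add: u_def pos_le_divide_eq)
  qed
  have Au: "mat_vec V a u p = r * u p" if "p \<in> V" for p
    using mat_vec_lincomb[of V a 1 v "-t" z p] ev[OF that] ez[OF that]
    by (simp add: u_def algebra_simps)
  have "u p0 = 0" using p0 zpos[OF p0(1)] by (simp add: u_def)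
  then have "\<forall>q\<in>V. u q = 0"
    using vanishing_everywhere[where u=u, OF u0 _ p0(1)] Au by simp
  then show ?thesis by (auto simp: u_def)
qed

lemma id_plus_pow_ge:
  assumes "\<And>q. q \<in> V \<Longrightarrow> 0 \<le> v q"
  shows "p \<in> V \<Longrightarrow> v p \<le> (id_plus_mat_vec V a ^^ N) v p"
proof (induction N arbitrary: p)
  case (Suc N)
  have "\<And>q. q \<in> V \<Longrightarrow> 0 \<le> (id_plus_mat_vec V a ^^ N) v q"
    using Suc.IH assms by (meson order.trans)
  then have "(id_plus_mat_vec V a ^^ N) v p \<le> (id_plus_mat_vec V a ^^ Suc N) v p"
    using mat_vec_nonneg[OF finite nonneg] Suc.prems by (simp add: id_plus_mat_vec_def)
  then show ?case using Suc.IH[OF Suc.prems] by linarith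
qed simp

text \<open>Each application of \<open>I + A\<close> shrinks the zero set.\<close>

lemma id_plus_pow_pos:
  "(\<forall>q\<in>V. 0 \<le> v q) \<Longrightarrow> (\<exists>p\<in>V. 0 < v p) \<Longrightarrow> \<exists>N. \<forall>p\<in>V. 0 < (id_plus_mat_vec V a ^^ N) v p"
proof (induction "card {p\<in>V. v p = 0}" arbitrary: v rule: less_induct)
  case less
  show ?case
  proof (cases "{p\<in>V. v p = 0} = {}")
    case True
    then have "\<forall>p\<in>V. 0 < (id_plus_mat_vec V a ^^ 0) v p" using less.prems(1) by force
    then show ?thesis by blast
  next
    case False
    then obtain p0 where p0: "p0 \<in> V" "v p0 = 0" by blast
    define v' where "v' = id_plus_mat_vec V a v"
    have v'ge: "v q \<le> v' q" if "q \<in> V" for q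
      using id_plus_pow_ge[of v q 1] less.prems(1) that by (simp add: v'_def)
    have "\<exists>p\<in>V. v p = 0 \<and> v' p \<noteq> 0"
    proof (rule ccontr)
      assume "\<not> ?thesis"
      then have "mat_vec V a v p = 0" if "p \<in> V" "v p = 0" for p
        using that by (auto simp: v'_def id_plus_mat_vec_def)
      then have "\<forall>q\<in>V. v q = 0"
        using vanishing_everywhere[where u=v, OF _ _ p0] less.prems(1) by blast
      then show False using less.prems(2) by force
    qed
    moreover have "{p\<in>V. v' p = 0} \<subseteq> {p\<in>V. v p = 0}"
      using v'ge less.prems(1) by (force intro: antisym)
    ultimately have "{p\<in>V. v' p = 0} \<subset> {p\<in>V. v p = 0}"
      by blast
    then have "card {p\<in>V. v' p = 0} < card {p\<in>V. v p = 0}"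
      using finite by (intro psubset_card_mono) auto
    moreover have "\<forall>q\<in>V. 0 \<le> v' q" using v'ge less.prems(1) by (meson order.trans)
    moreover have "\<exists>p\<in>V. 0 < v' p" using v'ge less.prems(2) by (meson order.strict_trans2)
    ultimately obtain N where "\<forall>p\<in>V. 0 < (id_plus_mat_vec V a ^^ N) v' p" using less.hyps by blast
    then have "\<forall>p\<in>V. 0 < (id_plus_mat_vec V a ^^ Suc N) v p"
      by (simp only: v'_def funpow_Suc_right comp_apply)
    then show ?thesis by blast
  qed
qed

lemma collatz_wielandt_bound:
  assumes x: "x \<in> simplex_on V" and sub: "\<And>p. p \<in> V \<Longrightarrow> t * x p \<le> mat_vec V a x p"
  shows "t \<le> (\<Sum>p\<in>V. \<Sum>q\<in>V. a p q)"
proof -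
  define m where "m = Max (x ` V)"
  have "m \<in> x ` V" unfolding m_def using finite nonempty by (intro Max_in) auto
  then obtain p where p: "p \<in> V" "x p = m" by blast
  have xle: "x q \<le> m" if "q \<in> V" for q unfolding m_def using finite that by auto
  have "1 \<le> (\<Sum>q\<in>V. m)" using x sum_mono[of V x "\<lambda>_. m"] xle by (simp add: simplex_on_def)
  then have mpos: "0 < m"
    by (cases "m \<le> 0") (use mult_nonneg_nonpos[of "real (card V)" m] in auto)
  have "t * m \<le> mat_vec V a x p" using sub[OF p(1)] p(2) by simp
  also have "\<dots> \<le> (\<Sum>q\<in>V. a p q) * m" unfolding mat_vec_def sum_distrib_right
    by (rule sum_mono) (use nonneg p xle in \<open>auto intro: mult_left_mono\<close>)
  also have "\<dots> \<le> (\<Sum>p\<in>V. \<Sum>q\<in>V. a p q) * m"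
    using finite p nonneg mpos
    by (intro mult_right_mono member_le_sum[where f="\<lambda>p. \<Sum>q\<in>V. a p q"]) (auto intro: sum_nonneg)
  finally show ?thesis using mpos by simp
qed

lemma collatz_wielandt_maximiser:
  obtains z r where "z \<in> simplex_on V" "\<And>p. p \<in> V \<Longrightarrow> r * z p \<le> mat_vec V a z p"
    "\<And>x t. x \<in> simplex_on V \<Longrightarrow> \<forall>p\<in>V. t * x p \<le> mat_vec V a x p \<Longrightarrow> t \<le> r"
proof -
  define T where "T = {t. \<exists>x\<in>simplex_on V. \<forall>p\<in>V. t * x p \<le> mat_vec V a x p}"
  have unif: "(\<lambda>_. 1 / real (card V)) \<in> simplex_on V"
    using finite nonempty by (auto simp: simplex_on_def)
  have "0 \<le> mat_vec V a (\<lambda>_. 1 / real (card V)) p" if "p \<in> V" for p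
    using finite nonneg that by (intro mat_vec_nonneg) auto
  then have T0: "0 \<in> T" unfolding T_def using unif by auto
  have bdd: "bdd_above T"
    unfolding T_def by (rule bdd_aboveI) (use collatz_wielandt_bound in blast)
  define r where "r = Sup T"
  have le_r: "t \<le> r" if "t \<in> T" for t unfolding r_def using bdd that by (rule cSup_upper[rotated])
  have "\<exists>t\<in>T. r - 1 / (real n + 1) < t" for n
  proof -
    have "r - 1 / (real n + 1) < Sup T" unfolding r_def by simp
    then show ?thesis using less_cSup_iff[of T] T0 bdd by blast
  qed
  then have "\<exists>t x. x \<in> simplex_on V \<and> (\<forall>p\<in>V. t * x p \<le> mat_vec V a x p) \<and>
      r - 1 / (real n + 1) < t \<and> t \<le> r" for n
    using le_r unfolding T_def by blast
  then obtain tt xx where xx: "\<And>n. xx n \<in> simplex_on V"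
    and sub: "\<And>n p. p \<in> V \<Longrightarrow> tt n * xx n p \<le> mat_vec V a (xx n) p"
    and tt: "\<And>n. r - 1 / (real n + 1) < tt n" "\<And>n. tt n \<le> r"
    by metis
  have "\<bar>xx n p\<bar> \<le> 1" if "p \<in> V" for n p
    using xx[of n] that finite member_le_sum[of p V "xx n"] by (auto simp: simplex_on_def)
  then obtain \<sigma> z where \<sigma>: "strict_mono \<sigma>" and conv: "\<And>p. p \<in> V \<Longrightarrow> (\<lambda>n. xx (\<sigma> n) p) \<longlonglongrightarrow> z p"
    using finite_bolzano_weierstrass[OF finite] by metis
  have "(\<lambda>n. tt (\<sigma> n)) \<longlonglongrightarrow> r" by (rule tendsto_subseq_approx_from_below[OF tt \<sigma>])
  then have "z \<in> simplex_on V" "\<And>p. p \<in> V \<Longrightarrow> r * z p \<le> mat_vec V a z p"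
    using collatz_wielandt_limit[where x="\<lambda>n. xx (\<sigma> n)" and t="\<lambda>n. tt (\<sigma> n)", OF finite xx sub conv]
    by auto
  moreover have "t \<le> r" if "x \<in> simplex_on V" "\<forall>p\<in>V. t * x p \<le> mat_vec V a x p" for x t
    using that le_r by (auto simp: T_def)
  ultimately show ?thesis using that by blast
qed

text \<open>The Collatz--Wielandt maximiser is an eigenvector: otherwise a power of \<open>I + A\<close> turns it
  into a vector with a strictly larger Collatz--Wielandt value.\<close>

lemma collatz_wielandt_eigvec:
  assumes z: "z \<in> simplex_on V" and sub: "\<And>p. p \<in> V \<Longrightarrow> r * z p \<le> mat_vec V a z p"
    and max: "\<And>x t. x \<in> simplex_on V \<Longrightarrow> \<forall>p\<in>V. t * x p \<le> mat_vec V a x p \<Longrightarrow> t \<le> r"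
    and p: "p \<in> V"
  shows "mat_vec V a z p = r * z p"
proof (rule ccontr)
  assume ne: "mat_vec V a z p \<noteq> r * z p"
  define w where "w = (\<lambda>p. 1 * mat_vec V a z p + (- r) * z p)" \<comment> \<open>in the shape of \<open>id_plus_pow_lincomb\<close>\<close>
  have "\<forall>q\<in>V. 0 \<le> w q" using sub by (simp add: w_def)
  moreover have "0 < w p" using sub[OF p] ne by (simp add: w_def)
  ultimately obtain N where N: "\<forall>q\<in>V. 0 < (id_plus_mat_vec V a ^^ N) w q"
    using id_plus_pow_pos p by blast
  define u where "u = (id_plus_mat_vec V a ^^ N) z"
  have z0: "\<And>q. q \<in> V \<Longrightarrow> 0 \<le> z q" using z by (simp add: simplex_on_def)
  have uz: "z q \<le> u q" if "q \<in> V" for q unfolding u_def using id_plus_pow_ge z0 that by blast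
  have u0: "0 \<le> u q" if "q \<in> V" for q using uz z0 that by (meson order.trans)
  have gap: "mat_vec V a u q - r * u q = (id_plus_mat_vec V a ^^ N) w q" for q
    using id_plus_pow_lincomb[where N=N and \<alpha>=1 and f="mat_vec V a z" and \<beta>="- r" and g=z]
    by (simp add: w_def u_def mat_vec_id_plus_pow)
  have strict: "r * u q < mat_vec V a u q" if "q \<in> V" for q
    using gap[of q] N that by (metis diff_gt_0_iff_gt)
  obtain \<delta> where \<delta>: "0 < \<delta>" "\<And>q. q \<in> V \<Longrightarrow> (r + \<delta>) * u q \<le> mat_vec V a u q"
    using strict_subinvariance_margin[where u=u and r=r and a=a, OF finite u0 strict] by blast
  define s where "s = (\<Sum>q\<in>V. u q)"
  have "1 \<le> s" using z sum_mono[of V z u] uz by (simp add: s_def simplex_on_def)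
  then have "(\<lambda>q. u q / s) \<in> simplex_on V"
    using u0 by (simp add: simplex_on_def sum_divide_distrib[symmetric] s_def)
  moreover have "(r + \<delta>) * (u q / s) \<le> mat_vec V a (\<lambda>q. u q / s) q" if "q \<in> V" for q
  proof -
    have "mat_vec V a (\<lambda>q. u q / s) q = mat_vec V a u q / s"
      unfolding mat_vec_def by (simp add: sum_divide_distrib)
    then show ?thesis using \<delta>(2)[OF that] \<open>1 \<le> s\<close> by (simp add: divide_right_mono)
  qed
  ultimately have "r + \<delta> \<le> r" using max by blast
  then show False using \<delta>(1) by simp
qed

theorem perron_eigvec:
  obtains z r where "\<And>p. p \<in> V \<Longrightarrow> 0 < z p" "\<And>p. p \<in> V \<Longrightarrow> mat_vec V a z p = r * z p"
proof (rule collatz_wielandt_maximiser)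
  fix z r
  assume z: "z \<in> simplex_on V" "\<And>p. p \<in> V \<Longrightarrow> r * z p \<le> mat_vec V a z p"
    "\<And>x t. x \<in> simplex_on V \<Longrightarrow> \<forall>p\<in>V. t * x p \<le> mat_vec V a x p \<Longrightarrow> t \<le> r"
  then have eig: "\<And>p. p \<in> V \<Longrightarrow> mat_vec V a z p = r * z p"
    by (rule collatz_wielandt_eigvec)
  have "0 < z p" if p: "p \<in> V" for p
  proof (rule ccontr)
    assume "\<not> 0 < z p"
    then have "z p = 0" using z(1) p by (force simp: simplex_on_def)
    then have "\<forall>q\<in>V. z q = 0"
      by (intro vanishing_everywhere[where u=z, OF _ _ p]) (use z(1) eig in \<open>auto simp: simplex_on_def\<close>)
    then show False using z(1) by (simp add: simplex_on_def)
  qed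
  then show thesis by (rule that[OF _ eig])
qed

end

section \<open>Finite strongly connected k-graphs\<close>

locale strongly_connected_finite_kgraph =
  fixes k :: nat and G :: "'a kgraph"
  assumes kgraph: "is_kgraph k G" and finite: "finite_kgraph k G"
    and strongly_connected: "strongly_connected G"
begin

lemma k_pos: "0 < k"
  using kgraph by (simp add: is_kgraph_def)

lemma kvec_dg: "l \<in> mor G \<Longrightarrow> kvec k (dg G l)"
  using kgraph by (simp add: is_kgraph_def)

lemma rg_in_vertices: "l \<in> mor G \<Longrightarrow> rg G l \<in> vertices G"
  using kgraph by (simp add: is_kgraph_def)

lemma sr_in_vertices: "l \<in> mor G \<Longrightarrow> sr G l \<in> vertices G"
  using kgraph by (simp add: is_kgraph_def)

lemma dg_vertex: "v \<in> vertices G \<Longrightarrow> dg G v = vzero"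
  by (simp add: vertices_def)

lemma rg_vertex: "v \<in> vertices G \<Longrightarrow> rg G v = v"
  using kgraph by (simp add: is_kgraph_def)

lemma sr_vertex: "v \<in> vertices G \<Longrightarrow> sr G v = v"
  using kgraph by (simp add: is_kgraph_def)

lemma cmp_closed:
  assumes "l \<in> mor G" "n \<in> mor G" "sr G l = rg G n"
  shows "cmp G l n \<in> mor G" "rg G (cmp G l n) = rg G l" "sr G (cmp G l n) = sr G n"
    "dg G (cmp G l n) = vadd (dg G l) (dg G n)"
  using kgraph assms by (simp_all add: is_kgraph_def)

lemma unique_factorisation:
  assumes "l \<in> mor G" "kvec k m" "kvec k n" "dg G l = vadd m n"
  shows "\<exists>!(e, f). e \<in> mor G \<and> f \<in> mor G \<and> sr G e = rg G f \<and> l = cmp G e f \<and>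
                   dg G e = m \<and> dg G f = n"
  using kgraph assms unfolding is_kgraph_def by blast

lemma factorisation:
  assumes "l \<in> mor G" "kvec k m" "kvec k n" "dg G l = vadd m n"
  obtains e f where "e \<in> mor G" "f \<in> mor G" "sr G e = rg G f" "l = cmp G e f"
    "dg G e = m" "dg G f = n"
  using unique_factorisation[OF assms] that by blast

lemma factorisation_unique:
  assumes "e \<in> mor G" "f \<in> mor G" "sr G e = rg G f"
    "e' \<in> mor G" "f' \<in> mor G" "sr G e' = rg G f'"
    "cmp G e f = cmp G e' f'" "dg G e = dg G e'" "dg G f = dg G f'"
  shows "e = e' \<and> f = f'"
proof -
  have "cmp G e f \<in> mor G" "dg G (cmp G e f) = vadd (dg G e) (dg G f)"
    using cmp_closed assms by auto
  from unique_factorisation[OF this(1) kvec_dg[OF assms(1)] kvec_dg[OF assms(2)] this(2)]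
  have "(e, f) = (e', f')"
    by (rule Uniq_D[OF conjunct2[OF ex1_iff_ex_Uniq[THEN iffD1]]]) (use assms in simp_all)
  then show ?thesis by simp
qed

lemma finite_vertices: "finite (vertices G)"
  using finite unfolding finite_kgraph_def vertices_def by simp

lemma finite_degree: "finite {l \<in> mor G. dg G l = n}"
  using finite by (simp add: finite_kgraph_def)

lemma kvec_ebas: "i < k \<Longrightarrow> kvec k (ebas i)"
  by (simp add: kvec_def ebas_def)

definition tdeg :: "'a \<Rightarrow> nat" where
  "tdeg l = (\<Sum>i<k. dg G l i)"

lemma tdeg_zero_vertex:
  assumes "l \<in> mor G" "tdeg l = 0"
  shows "l \<in> vertices G"
proof -
  have "dg G l i = 0" for i
    using assms kvec_dg[OF assms(1)] by (cases "i < k") (auto simp: tdeg_def kvec_def)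
  then show ?thesis using assms(1) by (auto simp: vertices_def vzero_def)
qed

lemma split_first_edge:
  assumes "l \<in> mor G" "i < k" "0 < dg G l i"
  obtains e l' where "e \<in> mor G" "l' \<in> mor G" "sr G e = rg G l'" "l = cmp G e l'"
    "dg G e = ebas i" "rg G e = rg G l" "sr G l' = sr G l" "tdeg l' < tdeg l"
    "dg G l' i = dg G l i - 1"
proof -
  let ?n = "\<lambda>j. dg G l j - ebas i j"
  have kn: "kvec k ?n" using kvec_dg[OF assms(1)] by (simp add: kvec_def)
  have "dg G l = vadd (ebas i) ?n"
    using assms(3) by (auto simp: vadd_def ebas_def)
  then obtain e l' where el: "e \<in> mor G" "l' \<in> mor G" "sr G e = rg G l'" "l = cmp G e l'"
    "dg G e = ebas i" "dg G l' = ?n"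
    using factorisation[OF assms(1) kvec_ebas[OF assms(2)] kn] by blast
  have "rg G e = rg G l" "sr G l' = sr G l" using cmp_closed[OF el(1-3)] el(4) by simp_all
  moreover have "tdeg l = (\<Sum>j<k. ebas i j + dg G l' j)" unfolding tdeg_def
    by (rule sum.cong) (auto simp: el(6) ebas_def assms(3))
  then have "tdeg l = 1 + tdeg l'" using assms(2) by (simp add: sum.distrib tdeg_def ebas_def)
  moreover have "dg G l' i = dg G l i - 1" using el(6) by (simp add: ebas_def)
  ultimately show ?thesis using that el by simp
qed

lemma edge_closed_along_path:
  assumes step: "\<And>e i. e \<in> mor G \<Longrightarrow> i < k \<Longrightarrow> dg G e = ebas i \<Longrightarrow> P (rg G e) \<Longrightarrow> P (sr G e)"
  shows "l \<in> mor G \<Longrightarrow> P (rg G l) \<Longrightarrow> P (sr G l)"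
proof (induction "tdeg l" arbitrary: l rule: less_induct)
  case less
  show ?case
  proof (cases "tdeg l = 0")
    case True
    then have "l \<in> vertices G" using tdeg_zero_vertex less.prems by blast
    then show ?thesis using less.prems rg_vertex sr_vertex by metis
  next
    case False
    then obtain i where i: "i < k" "0 < dg G l i" by (auto simp: tdeg_def)
    obtain e l' where el: "e \<in> mor G" "l' \<in> mor G" "sr G e = rg G l'" "dg G e = ebas i"
      "rg G e = rg G l" "sr G l' = sr G l" "tdeg l' < tdeg l"
      by (rule split_first_edge[OF less.prems(1) i]) blast
    have "P (sr G e)" using step[OF el(1) i(1) el(4)] less.prems(2) el(5) by simp
    then show ?thesis using less.hyps[OF el(7) el(2)] el(3,6) by simp
  qed
qed

lemma edge_closed_all_vertices:
  assumes "\<And>e i. e \<in> mor G \<Longrightarrow> i < k \<Longrightarrow> dg G e = ebas i \<Longrightarrow> P (rg G e) \<Longrightarrow> P (sr G e)"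
    and "v \<in> vertices G" "P v" "w \<in> vertices G"
  shows "P w"
proof -
  obtain l where l: "l \<in> mor G" "rg G l = v" "sr G l = w"
    using strongly_connected assms(2,4) unfolding strongly_connected_def by blast
  have "P (sr G l)"
  proof (rule edge_closed_along_path[where P=P])
    show "\<And>e i. e \<in> mor G \<Longrightarrow> i < k \<Longrightarrow> dg G e = ebas i \<Longrightarrow> P (rg G e) \<Longrightarrow> P (sr G e)"
      by (rule assms(1))
  qed (use l assms(3) in auto)
  then show ?thesis using l by simp
qed

end

section \<open>The matrices \<open>B_i\<close> and their common Perron eigenvector\<close>

locale weighted_kgraph = strongly_connected_finite_kgraph k G for k :: nat and G :: "'a kgraph" +
  fixes y :: "'a \<Rightarrow> real" and \<theta> :: real
  assumes y_functor: "Rplus_functor G y" and \<theta>_pos: "0 < \<theta>"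
    and vertices_nonempty: "vertices G \<noteq> {}"
begin

lemma y_cmp: "l \<in> mor G \<Longrightarrow> n \<in> mor G \<Longrightarrow> sr G l = rg G n \<Longrightarrow> y (cmp G l n) = y l + y n"
  using y_functor unfolding Rplus_functor_def by blast

lemma y_vertex: "v \<in> vertices G \<Longrightarrow> y v = 0"
  using y_functor unfolding Rplus_functor_def by blast

lemma y_nonneg: "l \<in> mor G \<Longrightarrow> 0 \<le> y l"
  using y_functor unfolding Rplus_functor_def by blast

definition edges :: "nat \<Rightarrow> 'a \<Rightarrow> 'a \<Rightarrow> 'a set" where
  "edges i p q = {l \<in> mor G. dg G l = ebas i \<and> rg G l = p \<and> sr G l = q}"

lemma finite_edges: "finite (edges i p q)"
  by (rule finite_subset[OF _ finite_degree[of "ebas i"]]) (auto simp: edges_def)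

lemma Bmat_edges: "Bmat G y \<theta> i p q = (\<Sum>l\<in>edges i p q. exp (- \<theta> * y l))"
  by (simp add: Bmat_def edges_def)

lemma Bmat_nonneg: "0 \<le> Bmat G y \<theta> i p q"
  unfolding Bmat_edges by (intro sum_nonneg) simp

lemma exp_le_Bmat:
  assumes "e \<in> mor G" "dg G e = ebas i"
  shows "exp (- \<theta> * y e) \<le> Bmat G y \<theta> i (rg G e) (sr G e)"
  unfolding Bmat_edges by (rule member_le_sum) (use assms finite_edges in \<open>auto simp: edges_def\<close>)

lemma edge_pairs_bij:
  assumes i: "i < k" and j: "j < k"
  shows "bij_betw (\<lambda>(e, f). cmp G e f) (\<Union>r\<in>vertices G. edges i p r \<times> edges j r q)
           {l \<in> mor G. dg G l = vadd (ebas i) (ebas j) \<and> rg G l = p \<and> sr G l = q}"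
proof (rule bij_betwI')
  fix a b assume "a \<in> (\<Union>r\<in>vertices G. edges i p r \<times> edges j r q)"
    "b \<in> (\<Union>r\<in>vertices G. edges i p r \<times> edges j r q)"
  then show "((\<lambda>(e, f). cmp G e f) a = (\<lambda>(e, f). cmp G e f) b) = (a = b)"
    using factorisation_unique by (auto simp: edges_def)
next
  fix a assume "a \<in> (\<Union>r\<in>vertices G. edges i p r \<times> edges j r q)"
  then show "(\<lambda>(e, f). cmp G e f) a \<in>
      {l \<in> mor G. dg G l = vadd (ebas i) (ebas j) \<and> rg G l = p \<and> sr G l = q}"
    using cmp_closed by (auto simp: edges_def)
next
  fix l assume "l \<in> {l \<in> mor G. dg G l = vadd (ebas i) (ebas j) \<and> rg G l = p \<and> sr G l = q}"
  then have l: "l \<in> mor G" "dg G l = vadd (ebas i) (ebas j)" "rg G l = p" "sr G l = q" by auto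
  obtain e f where ef: "e \<in> mor G" "f \<in> mor G" "sr G e = rg G f" "l = cmp G e f"
    "dg G e = ebas i" "dg G f = ebas j"
    using factorisation[OF l(1) kvec_ebas[OF i] kvec_ebas[OF j] l(2)] by blast
  then have "(e, f) \<in> edges i p (sr G e) \<times> edges j (sr G e) q"
    using cmp_closed[OF ef(1-3)] l(3,4) by (simp add: edges_def)
  then show "\<exists>a\<in>\<Union>r\<in>vertices G. edges i p r \<times> edges j r q. l = (\<lambda>(e, f). cmp G e f) a"
    using ef(4) sr_in_vertices[OF ef(1)] by (intro bexI[of _ "(e, f)"]) auto
qed

lemma Bmat_product:
  assumes "i < k" "j < k"
  shows "(\<Sum>r\<in>vertices G. Bmat G y \<theta> i p r * Bmat G y \<theta> j r q) =
         (\<Sum>l\<in>{l \<in> mor G. dg G l = vadd (ebas i) (ebas j) \<and> rg G l = p \<and> sr G l = q}. exp (- \<theta> * y l))"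
proof -
  let ?Q = "\<Union>r\<in>vertices G. edges i p r \<times> edges j r q"
  have "(\<Sum>r\<in>vertices G. Bmat G y \<theta> i p r * Bmat G y \<theta> j r q) =
        (\<Sum>r\<in>vertices G. \<Sum>(e, f)\<in>edges i p r \<times> edges j r q. exp (- \<theta> * y e) * exp (- \<theta> * y f))"
    unfolding Bmat_edges sum_product sum.cartesian_product by simp
  also have "\<dots> = (\<Sum>(e, f)\<in>?Q. exp (- \<theta> * y e) * exp (- \<theta> * y f))"
    by (rule sum.UNION_disjoint[symmetric]) (simp_all add: finite_vertices finite_edges, auto simp: edges_def)
  also have "\<dots> = (\<Sum>(e, f)\<in>?Q. exp (- \<theta> * y (cmp G e f)))"
    by (rule sum.cong) (auto simp: edges_def y_cmp exp_add[symmetric] algebra_simps)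
  also have "\<dots> = (\<Sum>l\<in>{l \<in> mor G. dg G l = vadd (ebas i) (ebas j) \<and> rg G l = p \<and> sr G l = q}.
                     exp (- \<theta> * y l))"
    using sum.reindex_bij_betw[OF edge_pairs_bij[OF assms], of "\<lambda>l. exp (- \<theta> * y l)"]
    by (simp add: case_prod_beta')
  finally show ?thesis .
qed

lemma Bmat_commute:
  assumes "i < k" "j < k"
  shows "mat_vec (vertices G) (Bmat G y \<theta> i) (mat_vec (vertices G) (Bmat G y \<theta> j) v) p =
         mat_vec (vertices G) (Bmat G y \<theta> j) (mat_vec (vertices G) (Bmat G y \<theta> i) v) p"
proof -
  have *: "mat_vec (vertices G) (Bmat G y \<theta> i) (mat_vec (vertices G) (Bmat G y \<theta> j) v) p =
    (\<Sum>q\<in>vertices G. (\<Sum>r\<in>vertices G. Bmat G y \<theta> i p r * Bmat G y \<theta> j r q) * v q)" for i j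
    unfolding mat_vec_def sum_distrib_left sum_distrib_right
    by (subst sum.swap) (simp add: algebra_simps)
  show ?thesis unfolding * Bmat_product[OF assms] Bmat_product[OF assms(2,1)]
    by (simp add: vadd_def add.commute)
qed

definition Bsum :: "'a \<Rightarrow> 'a \<Rightarrow> real" where
  "Bsum p q = (\<Sum>i<k. Bmat G y \<theta> i p q)"

lemma mat_vec_Bsum: "mat_vec (vertices G) Bsum v p = (\<Sum>i<k. mat_vec (vertices G) (Bmat G y \<theta> i) v p)"
  unfolding mat_vec_def Bsum_def sum_distrib_right by (rule sum.swap)

lemma Bsum_edge_pos:
  assumes "e \<in> mor G" "i < k" "dg G e = ebas i"
  shows "0 < Bsum (rg G e) (sr G e)"
proof -
  have "exp (- \<theta> * y e) \<le> Bmat G y \<theta> i (rg G e) (sr G e)" by (rule exp_le_Bmat[OF assms(1,3)])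
  also have "\<dots> \<le> Bsum (rg G e) (sr G e)"
    unfolding Bsum_def using assms(2) Bmat_nonneg by (intro member_le_sum) auto
  finally show ?thesis by (smt (verit) exp_gt_zero)
qed

sublocale Bsum_matrix: irreducible_nonneg_matrix "vertices G" Bsum
proof
  show "\<And>p q. 0 \<le> Bsum p q" unfolding Bsum_def by (intro sum_nonneg Bmat_nonneg)
  show "irreducible_on (vertices G) Bsum"
    unfolding irreducible_on_def
  proof (intro allI impI ballI)
    fix P q
    assume "\<forall>p\<in>vertices G. \<forall>q\<in>vertices G. Bsum p q > 0 \<longrightarrow> P p \<longrightarrow> P q"
      and "\<exists>p\<in>vertices G. P p" and "q \<in> vertices G"
    then show "P q"
      using edge_closed_all_vertices[where P=P] Bsum_edge_pos rg_in_vertices sr_in_vertices by metis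
  qed
qed (use finite_vertices vertices_nonempty in auto)

text \<open>Each \<open>B_i\<close> maps the Perron eigenvector of \<open>\<Sum> B_i\<close> to an eigenvector of \<open>\<Sum> B_i\<close>
  with the same eigenvalue, hence to a multiple of itself.\<close>

lemma common_perron_eigvec:
  obtains z where "\<And>p. p \<in> vertices G \<Longrightarrow> 0 < z p"
    "\<And>i p. i < k \<Longrightarrow> p \<in> vertices G \<Longrightarrow> mat_vec (vertices G) (Bmat G y \<theta> i) z p = rhoB G y \<theta> i * z p"
proof -
  let ?V = "vertices G"
  obtain z r where zpos: "\<And>p. p \<in> ?V \<Longrightarrow> 0 < z p" and ez: "\<And>p. p \<in> ?V \<Longrightarrow> mat_vec ?V Bsum z p = r * z p"
    using Bsum_matrix.perron_eigvec by blast
  have eig: "mat_vec ?V (Bmat G y \<theta> i) z p = rhoB G y \<theta> i * z p" if i: "i < k" and p: "p \<in> ?V" for i p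
  proof -
    let ?w = "mat_vec ?V (Bmat G y \<theta> i) z"
    have "mat_vec ?V Bsum ?w q = r * ?w q" if "q \<in> ?V" for q
    proof -
      have "mat_vec ?V Bsum ?w q = (\<Sum>j<k. mat_vec ?V (Bmat G y \<theta> i) (mat_vec ?V (Bmat G y \<theta> j) z) q)"
        unfolding mat_vec_Bsum by (rule sum.cong) (use Bmat_commute i in auto)
      also have "\<dots> = mat_vec ?V (Bmat G y \<theta> i) (\<lambda>q. \<Sum>j<k. mat_vec ?V (Bmat G y \<theta> j) z q) q"
        unfolding mat_vec_def sum_distrib_left by (rule sum.swap)
      also have "\<dots> = mat_vec ?V (Bmat G y \<theta> i) (\<lambda>q. r * z q) q"
        by (rule mat_vec_cong) (simp add: ez flip: mat_vec_Bsum)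
      also have "\<dots> = r * ?w q" unfolding mat_vec_def by (simp add: sum_distrib_left algebra_simps)
      finally show ?thesis .
    qed
    then obtain c where c: "\<forall>q\<in>?V. ?w q = c * z q"
      using Bsum_matrix.eigvec_proportional[where z=z and r=r and v="?w", OF zpos ez] by blast
    have "specrad ?V (Bmat G y \<theta> i) = c"
      by (rule specrad_eq_pos_eigval[where z=z])
        (use finite_vertices vertices_nonempty Bmat_nonneg zpos c in auto)
    then show ?thesis using c p by (simp add: rhoB_def)
  qed
  show ?thesis by (rule that[of z]) (simp_all add: zpos eig)
qed

definition normalised_common_eigvec :: "('a \<Rightarrow> real) \<Rightarrow> bool" where
  "normalised_common_eigvec \<xi> \<longleftrightarrow>
     (\<forall>v\<in>vertices G. 0 < \<xi> v) \<and> (\<forall>v. v \<notin> vertices G \<longrightarrow> \<xi> v = 0) \<and>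
     (\<Sum>v\<in>vertices G. \<xi> v) = 1 \<and>
     (\<forall>i<k. \<forall>p\<in>vertices G. (\<Sum>q\<in>vertices G. Bmat G y \<theta> i p q * \<xi> q) = rhoB G y \<theta> i * \<xi> p)"

lemma normalised_common_eigvec_exists: "\<exists>\<xi>. normalised_common_eigvec \<xi>"
proof -
  let ?V = "vertices G"
  obtain z where zpos: "\<And>p. p \<in> ?V \<Longrightarrow> 0 < z p"
    and ez: "\<And>i p. i < k \<Longrightarrow> p \<in> ?V \<Longrightarrow> mat_vec ?V (Bmat G y \<theta> i) z p = rhoB G y \<theta> i * z p"
    using common_perron_eigvec by blast
  define s where "s = (\<Sum>q\<in>?V. z q)"
  have spos: "0 < s" unfolding s_def using zpos vertices_nonempty finite_vertices by (intro sum_pos) auto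
  have "normalised_common_eigvec (\<lambda>p. if p \<in> ?V then z p / s else 0)"
    unfolding normalised_common_eigvec_def
  proof (intro conjI allI impI ballI)
    show "(\<Sum>v\<in>?V. if v \<in> ?V then z v / s else 0) = 1"
      using spos by (simp add: sum_divide_distrib[symmetric] s_def)
    fix i p assume "i < k" "p \<in> ?V"
    then show "(\<Sum>q\<in>?V. Bmat G y \<theta> i p q * (if q \<in> ?V then z q / s else 0)) =
        rhoB G y \<theta> i * (if p \<in> ?V then z p / s else 0)"
      using ez[of i p] by (simp add: mat_vec_def sum_divide_distrib[symmetric])
  qed (use zpos spos in auto)
  then show ?thesis by blast
qed

lemma normalised_common_eigvec_unique:
  assumes "normalised_common_eigvec \<xi>" "normalised_common_eigvec \<xi>'"
  shows "\<xi>' = \<xi>"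
proof -
  let ?V = "vertices G"
  let ?R = "\<Sum>i<k. rhoB G y \<theta> i"
  have eig: "mat_vec ?V Bsum f p = ?R * f p" if "normalised_common_eigvec f" "p \<in> ?V" for f p
  proof -
    have "mat_vec ?V Bsum f p = (\<Sum>i<k. rhoB G y \<theta> i * f p)"
      unfolding mat_vec_Bsum using that by (simp add: mat_vec_def normalised_common_eigvec_def)
    then show ?thesis by (simp add: sum_distrib_right)
  qed
  have "\<exists>t. \<forall>p\<in>?V. \<xi>' p = t * \<xi> p"
    using assms eig[OF assms(1)] eig[OF assms(2)]
    by (intro Bsum_matrix.eigvec_proportional) (auto simp: normalised_common_eigvec_def)
  then obtain t where t: "\<forall>p\<in>?V. \<xi>' p = t * \<xi> p" by blast
  have "1 = t * (\<Sum>p\<in>?V. \<xi> p)"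
    using assms(2) t by (simp add: sum_distrib_left normalised_common_eigvec_def)
  then have "t = 1" using assms(1) by (simp add: normalised_common_eigvec_def)
  show ?thesis
  proof
    fix v show "\<xi>' v = \<xi> v"
      using t \<open>t = 1\<close> assms by (cases "v \<in> ?V") (auto simp: normalised_common_eigvec_def)
  qed
qed

lemma normalised_common_eigvec_xivec: "normalised_common_eigvec (xivec k G y \<theta>)"
  using normalised_common_eigvec_exists normalised_common_eigvec_unique
  unfolding xivec_def normalised_common_eigvec_def[symmetric] by (metis theI)

end

section \<open>Weights of paths\<close>

context weighted_kgraph
begin

abbreviation \<xi> :: "'a \<Rightarrow> real" where "\<xi> \<equiv> xivec k G y \<theta>"
abbreviation \<rho> :: "nat \<Rightarrow> real" where "\<rho> \<equiv> rhoB G y \<theta>"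

lemma xivec_pos: "v \<in> vertices G \<Longrightarrow> 0 < \<xi> v"
  using normalised_common_eigvec_xivec by (simp add: normalised_common_eigvec_def)

lemma xivec_eigvec: "i < k \<Longrightarrow> p \<in> vertices G \<Longrightarrow> (\<Sum>q\<in>vertices G. Bmat G y \<theta> i p q * \<xi> q) = \<rho> i * \<xi> p"
  using normalised_common_eigvec_xivec by (simp add: normalised_common_eigvec_def)

lemma xivec_le_1: "v \<in> vertices G \<Longrightarrow> \<xi> v \<le> 1"
  using normalised_common_eigvec_xivec finite_vertices member_le_sum[of v "vertices G" \<xi>]
  by (auto simp: normalised_common_eigvec_def intro: less_imp_le)

lemma rhoB_nonneg: "0 \<le> \<rho> i" if "i < k"
proof -
  obtain v where v: "v \<in> vertices G" using vertices_nonempty by blast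
  have "0 \<le> (\<Sum>q\<in>vertices G. Bmat G y \<theta> i v q * \<xi> q)"
    using xivec_pos by (intro sum_nonneg mult_nonneg_nonneg Bmat_nonneg) (auto intro: less_imp_le)
  then show ?thesis using xivec_eigvec[OF that v] xivec_pos[OF v] by (simp add: zero_le_mult_iff)
qed

lemma edge_eigvec_ineq:
  assumes e: "e \<in> mor G" "i < k" "dg G e = ebas i"
  shows "exp (- \<theta> * y e) * \<xi> (sr G e) \<le> \<rho> i * \<xi> (rg G e)" and "0 < \<rho> i"
proof -
  have r: "rg G e \<in> vertices G" and s: "sr G e \<in> vertices G" using rg_in_vertices sr_in_vertices e by auto
  have "exp (- \<theta> * y e) * \<xi> (sr G e) \<le> Bmat G y \<theta> i (rg G e) (sr G e) * \<xi> (sr G e)"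
    using exp_le_Bmat[OF e(1,3)] xivec_pos[OF s] by simp
  also have "\<dots> \<le> (\<Sum>q\<in>vertices G. Bmat G y \<theta> i (rg G e) q * \<xi> q)"
    by (rule member_le_sum[where f="\<lambda>q. Bmat G y \<theta> i (rg G e) q * \<xi> q"])
      (use s finite_vertices in \<open>auto intro!: mult_nonneg_nonneg Bmat_nonneg less_imp_le[OF xivec_pos]\<close>)
  also have "\<dots> = \<rho> i * \<xi> (rg G e)" by (rule xivec_eigvec[OF e(2) r])
  finally show le: "exp (- \<theta> * y e) * \<xi> (sr G e) \<le> \<rho> i * \<xi> (rg G e)" .
  have "0 < exp (- \<theta> * y e) * \<xi> (sr G e)" using xivec_pos[OF s] by simp
  then show "0 < \<rho> i" using le xivec_pos[OF r] by (smt (verit) mult_nonpos_nonneg)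
qed

definition rho_deg_inv :: "'a \<Rightarrow> real" where
  "rho_deg_inv l = (\<Prod>i<k. inverse (\<rho> i ^ dg G l i))"

text \<open>\<open>weight l = wyt k G y \<theta> l powr \<theta>\<close>; unlike \<open>wyt\<close> it is multiplicative along composition
  up to the factor \<open>\<xi>\<close>.\<close>

definition weight :: "'a \<Rightarrow> real" where
  "weight l = exp (- \<theta> * y l) * rho_deg_inv l * \<xi> (sr G l)"

lemma rho_deg_inv_cmp:
  assumes "l \<in> mor G" "n \<in> mor G" "sr G l = rg G n"
  shows "rho_deg_inv (cmp G l n) = rho_deg_inv l * rho_deg_inv n"
  unfolding rho_deg_inv_def cmp_closed(4)[OF assms] vadd_def
  by (simp add: power_add prod.distrib)

lemma rho_deg_inv_edge:
  assumes "dg G e = ebas j" "j < k"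
  shows "rho_deg_inv e = inverse (\<rho> j)"
proof -
  have "rho_deg_inv e = (\<Prod>i<k. if i = j then inverse (\<rho> i) else 1)"
    unfolding rho_deg_inv_def assms(1) by (rule prod.cong) (auto simp: ebas_def)
  also have "\<dots> = inverse (\<rho> j)" using assms(2) by (simp add: prod.delta)
  finally show ?thesis .
qed

lemma rho_deg_inv_nonneg: "0 \<le> rho_deg_inv l"
  unfolding rho_deg_inv_def by (intro prod_nonneg) (simp add: rhoB_nonneg)

lemma rho_deg_inv_pos:
  assumes "l \<in> mor G"
  shows "0 < rho_deg_inv l"
  unfolding rho_deg_inv_def
proof (rule prod_pos)
  fix i assume i: "i \<in> {..<k}"
  show "0 < inverse (\<rho> i ^ dg G l i)"
  proof (cases "dg G l i = 0")
    case False
    then obtain e l' where "e \<in> mor G" "dg G e = ebas i"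
      using split_first_edge[OF assms, of i] i by blast
    then show ?thesis using edge_eigvec_ineq(2) i by simp
  qed simp
qed

lemma weight_pos: "l \<in> mor G \<Longrightarrow> 0 < weight l"
  unfolding weight_def using rho_deg_inv_pos xivec_pos sr_in_vertices by simp

lemma weight_cmp:
  assumes "l \<in> mor G" "n \<in> mor G" "sr G l = rg G n"
  shows "weight (cmp G l n) = exp (- \<theta> * y l) * rho_deg_inv l * weight n"
  unfolding weight_def rho_deg_inv_cmp[OF assms] y_cmp[OF assms] cmp_closed(3)[OF assms]
  by (simp add: algebra_simps exp_add[symmetric])

lemma weight_vertex: "v \<in> vertices G \<Longrightarrow> weight v = \<xi> v"
  by (simp add: weight_def rho_deg_inv_def dg_vertex vzero_def y_vertex sr_vertex)

lemma weight_edge_le: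
  assumes "e \<in> mor G" "j < k" "dg G e = ebas j"
  shows "weight e \<le> \<xi> (rg G e)"
proof -
  have rp: "0 < \<rho> j" using edge_eigvec_ineq(2)[OF assms] .
  have "weight e = exp (- \<theta> * y e) * \<xi> (sr G e) / \<rho> j"
    unfolding weight_def rho_deg_inv_edge[OF assms(3,2)] by (simp add: field_simps)
  also have "\<dots> \<le> \<rho> j * \<xi> (rg G e) / \<rho> j"
    using edge_eigvec_ineq(1)[OF assms] rp by (intro divide_right_mono) auto
  finally show ?thesis using rp by simp
qed

lemma weight_append_edge_le:
  assumes "l \<in> mor G" "e \<in> mor G" "sr G l = rg G e" "j < k" "dg G e = ebas j"
  shows "weight (cmp G l e) \<le> weight l"
proof -
  have "weight (cmp G l e) = exp (- \<theta> * y l) * rho_deg_inv l * weight e"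
    by (rule weight_cmp[OF assms(1-3)])
  also have "\<dots> \<le> exp (- \<theta> * y l) * rho_deg_inv l * \<xi> (rg G e)"
    using weight_edge_le[OF assms(2,4,5)] rho_deg_inv_nonneg by (intro mult_left_mono) auto
  also have "\<dots> = weight l" using assms(3) by (simp add: weight_def)
  finally show ?thesis .
qed

lemma weight_le_xivec: "l \<in> mor G \<Longrightarrow> weight l \<le> \<xi> (rg G l)"
proof (induction "tdeg l" arbitrary: l rule: less_induct)
  case less
  show ?case
  proof (cases "tdeg l = 0")
    case True
    then have "l \<in> vertices G" using tdeg_zero_vertex less.prems by blast
    then show ?thesis using weight_vertex rg_vertex by simp
  next
    case False
    then obtain i where i: "i < k" "0 < dg G l i" by (auto simp: tdeg_def)
    obtain e l' where el: "e \<in> mor G" "l' \<in> mor G" "sr G e = rg G l'" "l = cmp G e l'"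
      "dg G e = ebas i" "rg G e = rg G l" "tdeg l' < tdeg l"
      by (rule split_first_edge[OF less.prems(1) i]) blast
    have "weight l = exp (- \<theta> * y e) * rho_deg_inv e * weight l'"
      unfolding el(4) by (rule weight_cmp[OF el(1-3)])
    also have "\<dots> \<le> exp (- \<theta> * y e) * rho_deg_inv e * \<xi> (rg G l')"
      using less.hyps[OF el(7) el(2)] rho_deg_inv_nonneg by (intro mult_left_mono) auto
    also have "\<dots> = weight e" using el(3) by (simp add: weight_def)
    also have "\<dots> \<le> \<xi> (rg G e)" by (rule weight_edge_le[OF el(1) i(1) el(5)])
    finally show ?thesis using el(6) by simp
  qed
qed

lemma weight_le_1: "l \<in> mor G \<Longrightarrow> weight l \<le> 1"
  using weight_le_xivec xivec_le_1 rg_in_vertices by (meson order.trans)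

lemma Bmat_le_Max:
  assumes "v \<in> vertices G" "w \<in> vertices G"
  shows "Bmat G y \<theta> i v w \<le> Max {Bmat G y \<theta> i v w | v w. v \<in> vertices G \<and> w \<in> vertices G}"
proof (rule Max_ge)
  have "{Bmat G y \<theta> i v w | v w. v \<in> vertices G \<and> w \<in> vertices G} =
      (\<lambda>(v, w). Bmat G y \<theta> i v w) ` (vertices G \<times> vertices G)" by auto
  then show "finite {Bmat G y \<theta> i v w | v w. v \<in> vertices G \<and> w \<in> vertices G}"
    using finite_vertices by simp
qed (use assms in blast)

lemma weight_le_Max_ratio_pow:
  assumes i: "i < k"
    and gt: "Max {Bmat G y \<theta> i v w | v w. v \<in> vertices G \<and> w \<in> vertices G} < \<rho> i"
  shows "l \<in> mor G \<Longrightarrow>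
    weight l \<le> (Max {Bmat G y \<theta> i v w | v w. v \<in> vertices G \<and> w \<in> vertices G} / \<rho> i) ^ dg G l i"
proof (induction "dg G l i" arbitrary: l)
  case 0
  then show ?case using weight_le_1 by simp
next
  case (Suc d)
  let ?M = "Max {Bmat G y \<theta> i v w | v w. v \<in> vertices G \<and> w \<in> vertices G}"
  obtain e l' where el: "e \<in> mor G" "l' \<in> mor G" "sr G e = rg G l'" "l = cmp G e l'"
    "dg G e = ebas i" "dg G l' i = dg G l i - 1"
    by (rule split_first_edge[OF Suc.prems i]) (use Suc.hyps(2) in auto)
  have Ble: "Bmat G y \<theta> i (rg G e) (sr G e) \<le> ?M"
    using Bmat_le_Max rg_in_vertices[OF el(1)] sr_in_vertices[OF el(1)] by blast
  have M0: "0 \<le> ?M" using Ble Bmat_nonneg order.trans by blast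
  have rp: "0 < \<rho> i" using M0 gt by linarith
  have "weight l = exp (- \<theta> * y e) / \<rho> i * weight l'"
    unfolding el(4) weight_cmp[OF el(1-3)] rho_deg_inv_edge[OF el(5) i] by (simp add: field_simps)
  also have "\<dots> \<le> ?M / \<rho> i * (?M / \<rho> i) ^ d"
  proof (rule mult_mono)
    show "exp (- \<theta> * y e) / \<rho> i \<le> ?M / \<rho> i"
      using exp_le_Bmat[OF el(1,5)] Ble rp by (intro divide_right_mono) auto
    have "d = dg G l' i" using el(6) Suc.hyps(2) by simp
    then show "weight l' \<le> (?M / \<rho> i) ^ d" using Suc.hyps(1) el(2) by simp
  qed (use M0 rp weight_pos[OF el(2)] in auto)
  finally show ?case unfolding Suc.hyps(2)[symmetric] by simp
qed

lemma weight_le_inverse_rho_pow: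
  assumes gt: "\<forall>i<k. 1 < \<rho> i" and l: "l \<in> mor G" and i: "i < k"
  shows "weight l \<le> inverse (\<rho> i) ^ dg G l i"
proof -
  have f01: "0 \<le> inverse (\<rho> j ^ dg G l j) \<and> inverse (\<rho> j ^ dg G l j) \<le> 1" if "j < k" for j
  proof -
    have "1 \<le> \<rho> j ^ dg G l j" using gt that by (intro one_le_power) auto
    then show ?thesis by (simp add: inverse_le_1_iff)
  qed
  have "rho_deg_inv l = inverse (\<rho> i ^ dg G l i) * (\<Prod>j\<in>{..<k} - {i}. inverse (\<rho> j ^ dg G l j))"
    unfolding rho_deg_inv_def using i by (intro prod.remove) auto
  also have "\<dots> \<le> inverse (\<rho> i ^ dg G l i)"
    using f01 f01[OF i] by (intro mult_right_le_one_le prod_le_1 prod_nonneg) auto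
  finally have "rho_deg_inv l \<le> inverse (\<rho> i) ^ dg G l i" by (simp add: power_inverse)
  moreover have "weight l \<le> 1 * rho_deg_inv l * 1"
    unfolding weight_def using y_nonneg[OF l] \<theta>_pos xivec_le_1[OF sr_in_vertices[OF l]]
      rho_deg_inv_nonneg xivec_pos[OF sr_in_vertices[OF l]]
    by (intro mult_mono) auto
  ultimately show ?thesis by simp
qed

lemma weight_decay:
  assumes "card (vertices G) = 1 \<Longrightarrow> cond_wI k G y \<theta>"
    and "card (vertices G) \<noteq> 1 \<Longrightarrow> cond_wII k G y \<theta>"
  shows "\<exists>i<k. \<exists>c. 0 \<le> c \<and> c < 1 \<and> (\<forall>l\<in>mor G. weight l \<le> c ^ dg G l i)"
proof (cases "card (vertices G) = 1")
  case True
  then have gt: "\<forall>i<k. 1 < \<rho> i" using assms(1) by (simp add: cond_wI_def)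
  then have "1 < \<rho> 0" using k_pos by blast
  show ?thesis
  proof (intro exI conjI ballI)
    show "0 < k" by (rule k_pos)
    show "0 \<le> inverse (\<rho> 0)" "inverse (\<rho> 0) < 1"
      using \<open>1 < \<rho> 0\<close> by (simp_all add: inverse_less_1_iff)
    show "weight l \<le> inverse (\<rho> 0) ^ dg G l 0" if "l \<in> mor G" for l
      by (rule weight_le_inverse_rho_pow[OF gt that k_pos])
  qed
next
  case False
  then obtain i where i: "i < k"
    and gt: "Max {Bmat G y \<theta> i v w | v w. v \<in> vertices G \<and> w \<in> vertices G} < \<rho> i"
    using assms(2) by (auto simp: cond_wII_def)
  obtain v where v: "v \<in> vertices G" using vertices_nonempty by blast
  let ?M = "Max {Bmat G y \<theta> i v w | v w. v \<in> vertices G \<and> w \<in> vertices G}"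
  have "0 \<le> ?M" using Bmat_le_Max[OF v v, of i] Bmat_nonneg order.trans by blast
  show ?thesis
  proof (intro exI conjI ballI)
    show "i < k" by (rule i)
    show "0 \<le> ?M / \<rho> i" "?M / \<rho> i < 1" using \<open>0 \<le> ?M\<close> gt by simp_all
    show "weight l \<le> (?M / \<rho> i) ^ dg G l i" if "l \<in> mor G" for l
      by (rule weight_le_Max_ratio_pow[OF i gt that])
  qed
qed

lemma wyt_eq_weight_powr: "wyt k G y \<theta> l = weight l powr (1 / \<theta>)"
proof -
  have "weight l powr (1 / \<theta>) = exp (- \<theta> * y l) powr (1 / \<theta>) * (rho_deg_inv l * \<xi> (sr G l)) powr (1 / \<theta>)"
    unfolding weight_def mult.assoc by (rule powr_mult)
  also have "exp (- \<theta> * y l) powr (1 / \<theta>) = exp (- y l)" using \<theta>_pos by (simp add: exp_powr_real)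
  finally show ?thesis by (simp add: wyt_def rho_deg_inv_def)
qed

end

section \<open>Infinite paths and their Bratteli segments\<close>

lemma bdeg_Suc:
  assumes "0 < k"
  shows "bdeg k (Suc n) = vadd (bdeg k n) (ebas (n mod k))"
proof
  fix i
  show "bdeg k (Suc n) i = vadd (bdeg k n) (ebas (n mod k)) i"
  proof (cases "Suc (n mod k) = k")
    case True
    then have "Suc n mod k = 0" "Suc n div k = Suc (n div k)" by (simp_all add: mod_Suc div_Suc)
    then show ?thesis using True by (auto simp: bdeg_def vadd_def ebas_def)
  next
    case False
    then have "Suc n mod k = Suc (n mod k)" "Suc n div k = n div k" by (simp_all add: mod_Suc div_Suc)
    then show ?thesis using assms by (auto simp: bdeg_def vadd_def ebas_def)
  qed
qed

lemma kvec_bdeg: "kvec k (bdeg k n)"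
  by (simp add: kvec_def bdeg_def)

lemma bdeg_0: "bdeg k 0 = vzero"
  by (auto simp: bdeg_def vzero_def)

lemma bdeg_mono: "0 < k \<Longrightarrow> m \<le> n \<Longrightarrow> bdeg k m \<le> bdeg k n"
  by (rule lift_Suc_mono_le[where f="bdeg k"]) (auto simp: bdeg_Suc le_fun_def vadd_def)

lemma bdeg_mult: "i < k \<Longrightarrow> bdeg k (k * M) i = M"
  by (simp add: bdeg_def)

lemma bdeg_unbounded:
  assumes "kvec k m"
  obtains N where "m \<le> bdeg k N"
proof
  show "m \<le> bdeg k (k * (\<Sum>i<k. m i))"
    unfolding le_fun_def
  proof
    fix i show "m i \<le> bdeg k (k * (\<Sum>i<k. m i)) i"
    proof (cases "i < k")
      case True
      then show ?thesis using member_le_sum[of i "{..<k}" m] by (simp add: bdeg_mult)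
    qed (use assms in \<open>simp add: kvec_def\<close>)
  qed
qed

lemma kvec_vzero: "kvec k vzero"
  by (simp add: kvec_def vzero_def)

lemma vzero_le: "vzero \<le> m"
  by (simp add: le_fun_def vzero_def)

lemma vsub_vzero: "vsub n vzero = n"
  by (simp add: vsub_def vzero_def)

context strongly_connected_finite_kgraph
begin

lemma infpaths_mor:
  assumes "x \<in> infpaths k G" "kvec k m" "kvec k n" "m \<le> n"
  shows "x m n \<in> mor G" "dg G (x m n) = vsub n m"
  using assms unfolding infpaths_def by blast+

lemma infpaths_cmp:
  assumes "x \<in> infpaths k G" "kvec k m" "kvec k n" "kvec k p" "m \<le> n" "n \<le> p"
  shows "sr G (x m n) = rg G (x n p)" "cmp G (x m n) (x n p) = x m p"
  using assms unfolding infpaths_def by blast+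

lemma infpaths_undefined:
  assumes "x \<in> infpaths k G" "\<not> (kvec k m \<and> kvec k n \<and> m \<le> n)"
  shows "x m n = undefined"
  using assms unfolding infpaths_def by blast

lemma bseg_mor: "x \<in> infpaths k G \<Longrightarrow> bseg k x n \<in> mor G"
  unfolding bseg_def using infpaths_mor(1) kvec_bdeg kvec_vzero vzero_le by blast

lemma dg_bseg: "x \<in> infpaths k G \<Longrightarrow> dg G (bseg k x n) = bdeg k n"
  unfolding bseg_def using infpaths_mor(2)[OF _ kvec_vzero kvec_bdeg vzero_le] vsub_vzero by simp

lemma bseg_0: "bseg k x 0 = prange x"
  by (simp add: bseg_def prange_def bdeg_0)

lemma prange_in_vertices: "x \<in> infpaths k G \<Longrightarrow> prange x \<in> vertices G"
  using infpaths_mor[OF _ kvec_vzero kvec_vzero order.refl] vsub_vzero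
  by (simp add: prange_def vertices_def)

lemma bseg_Suc:
  fixes n :: nat
  assumes x: "x \<in> infpaths k G"
  defines "e \<equiv> x (bdeg k n) (bdeg k (Suc n))"
  shows "bseg k x (Suc n) = cmp G (bseg k x n) e" "sr G (bseg k x n) = rg G e"
    "e \<in> mor G" "dg G e = ebas (n mod k)"
proof -
  have le: "bdeg k n \<le> bdeg k (Suc n)" using bdeg_mono k_pos by simp
  show "bseg k x (Suc n) = cmp G (bseg k x n) e" "sr G (bseg k x n) = rg G e"
    using infpaths_cmp[OF x kvec_vzero kvec_bdeg kvec_bdeg vzero_le le] unfolding e_def bseg_def by simp_all
  show "e \<in> mor G" "dg G e = ebas (n mod k)"
    using infpaths_mor[OF x kvec_bdeg kvec_bdeg le] k_pos
    unfolding e_def by (simp_all add: bdeg_Suc vsub_def vadd_def)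
qed

lemma infpaths_agree_below:
  assumes x: "x \<in> infpaths k G" and z: "z \<in> infpaths k G"
    and km: "kvec k m" and kn: "kvec k n" and kp: "kvec k p" and mn: "m \<le> n" and np: "n \<le> p"
    and eq: "x vzero p = z vzero p"
  shows "x m n = z m n"
proof -
  have "x vzero m = z vzero m \<and> x m p = z m p"
    using infpaths_cmp[OF x kvec_vzero km kp vzero_le order_trans[OF mn np]]
      infpaths_cmp[OF z kvec_vzero km kp vzero_le order_trans[OF mn np]] eq
      infpaths_mor[OF x kvec_vzero km vzero_le] infpaths_mor[OF z kvec_vzero km vzero_le]
      infpaths_mor[OF x km kp order_trans[OF mn np]] infpaths_mor[OF z km kp order_trans[OF mn np]]
    by (intro factorisation_unique) auto
  then show ?thesis
    using infpaths_cmp[OF x km kn kp mn np] infpaths_cmp[OF z km kn kp mn np]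
      infpaths_mor[OF x km kn mn] infpaths_mor[OF z km kn mn]
      infpaths_mor[OF x kn kp np] infpaths_mor[OF z kn kp np]
    using factorisation_unique[of "x m n" "x n p" "z m n" "z n p"] by auto
qed

lemma bseg_eq_le:
  assumes "x \<in> infpaths k G" "z \<in> infpaths k G" "bseg k x n = bseg k z n" "m \<le> n"
  shows "bseg k x m = bseg k z m"
  using infpaths_agree_below[OF assms(1,2) kvec_vzero kvec_bdeg kvec_bdeg vzero_le
      bdeg_mono[OF k_pos assms(4)]] assms(3)
  by (simp add: bseg_def)

lemma infpaths_eqI:
  assumes x: "x \<in> infpaths k G" and z: "z \<in> infpaths k G" and eq: "\<And>n. bseg k x n = bseg k z n"
  shows "x = z"
proof (intro ext)
  fix m n
  show "x m n = z m n"
  proof (cases "kvec k m \<and> kvec k n \<and> m \<le> n")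
    case True
    then obtain N where "n \<le> bdeg k N" using bdeg_unbounded by blast
    then show ?thesis
      using infpaths_agree_below[OF x z _ _ kvec_bdeg] True eq[of N] by (simp add: bseg_def)
  next
    case False
    then show ?thesis using infpaths_undefined x z by metis
  qed
qed

lemma mem_cylinder_bseg:
  assumes "x \<in> infpaths k G"
  shows "z \<in> cylinder k G (bseg k x n) \<longleftrightarrow> z \<in> infpaths k G \<and> bseg k z n = bseg k x n"
  unfolding cylinder_def dg_bseg[OF assms] by (simp add: bseg_def)

lemma cylinder_subset_infpaths: "cylinder k G l \<subseteq> infpaths k G"
  by (auto simp: cylinder_def)

lemma cylinder_contains_bseg_cylinder:
  assumes x: "x \<in> cylinder k G l" and l: "l \<in> mor G"
  obtains N where "cylinder k G (bseg k x N) \<subseteq> cylinder k G l"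
proof -
  have xI: "x \<in> infpaths k G" and xl: "x vzero (dg G l) = l" using x by (auto simp: cylinder_def)
  obtain N where N: "dg G l \<le> bdeg k N" using bdeg_unbounded kvec_dg[OF l] by blast
  have "z \<in> cylinder k G l" if "z \<in> cylinder k G (bseg k x N)" for z
  proof -
    have z: "z \<in> infpaths k G" "bseg k z N = bseg k x N" using that mem_cylinder_bseg[OF xI] by auto
    then have "z vzero (dg G l) = x vzero (dg G l)"
      using infpaths_agree_below[OF z(1) xI kvec_vzero kvec_dg[OF l] kvec_bdeg vzero_le N]
      by (simp add: bseg_def)
    then show ?thesis using z xl by (simp add: cylinder_def)
  qed
  then show ?thesis using that by blast
qed

definition meet_len :: "((nat \<Rightarrow> nat) \<Rightarrow> (nat \<Rightarrow> nat) \<Rightarrow> 'a) \<Rightarrow> ((nat \<Rightarrow> nat) \<Rightarrow> (nat \<Rightarrow> nat) \<Rightarrow> 'a) \<Rightarrow> nat" where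
  "meet_len x z = (GREATEST n. bseg k x n = bseg k z n)"

lemma meet_len_commute: "meet_len x z = meet_len z x"
  unfolding meet_len_def by (simp add: eq_commute)

lemma pmeet_eq_bseg_meet_len: "pmeet k x z = bseg k x (meet_len x z)"
  by (simp add: pmeet_def meet_len_def)

lemma bseg_eq_iff_le_meet_len:
  assumes x: "x \<in> infpaths k G" and z: "z \<in> infpaths k G" and ne: "x \<noteq> z"
    and r: "prange x = prange z"
  shows "bseg k x n = bseg k z n \<longleftrightarrow> n \<le> meet_len x z"
proof -
  obtain N0 where N0: "bseg k x N0 \<noteq> bseg k z N0" using infpaths_eqI[OF x z] ne by blast
  have bnd: "\<forall>n. bseg k x n = bseg k z n \<longrightarrow> n \<le> N0"
    using bseg_eq_le[OF x z] N0 by (meson nat_le_linear)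
  have P0: "bseg k x 0 = bseg k z 0" using r by (simp add: bseg_0)
  have a: "bseg k x (meet_len x z) = bseg k z (meet_len x z)"
    unfolding meet_len_def by (rule GreatestI_nat[where P="\<lambda>n. bseg k x n = bseg k z n", OF P0]) (use bnd in blast)
  show ?thesis
  proof
    assume "bseg k x n = bseg k z n"
    then show "n \<le> meet_len x z"
      unfolding meet_len_def by (rule Greatest_le_nat[where P="\<lambda>n. bseg k x n = bseg k z n"]) (use bnd in blast)
  qed (use bseg_eq_le[OF x z a] in blast)
qed

end

section \<open>The ultrametric \<open>d\<^sub>y\<^sub>,\<^sub>\<theta>\<close>\<close>

context weighted_kgraph
begin

lemma wyt_nonneg: "0 \<le> wyt k G y \<theta> l"
  by (simp add: wyt_def)

lemma wyt_bseg_pos: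
  assumes "x \<in> infpaths k G"
  shows "0 < wyt k G y \<theta> (bseg k x n)"
  unfolding wyt_eq_weight_powr powr_gt_zero using weight_pos[OF bseg_mor[OF assms, of n]] by linarith

lemma wyt_bseg_le_1:
  assumes "x \<in> infpaths k G"
  shows "wyt k G y \<theta> (bseg k x n) \<le> 1"
  unfolding wyt_eq_weight_powr
  using weight_le_1[OF bseg_mor[OF assms, of n]] weight_pos[OF bseg_mor[OF assms, of n]] \<theta>_pos
  by (intro powr_le1) auto

lemma wyt_bseg_antimono:
  assumes x: "x \<in> infpaths k G" and mn: "m \<le> n"
  shows "wyt k G y \<theta> (bseg k x n) \<le> wyt k G y \<theta> (bseg k x m)"
proof -
  have "weight (bseg k x (Suc j)) \<le> weight (bseg k x j)" for j
    using weight_append_edge_le[OF bseg_mor[OF x] bseg_Suc(3,2)[OF x], of "j mod k" j] k_pos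
      bseg_Suc(1,4)[OF x] by simp
  then have "weight (bseg k x n) \<le> weight (bseg k x m)"
    by (rule lift_Suc_antimono_le[where f="\<lambda>n. weight (bseg k x n)", OF _ mn])
  then show ?thesis unfolding wyt_eq_weight_powr
    using \<theta>_pos weight_pos bseg_mor x by (intro powr_mono2) (auto intro: less_imp_le)
qed

lemma wyt_bseg_eventually_less:
  assumes decay: "i < k" "0 \<le> c" "c < 1" "\<And>l. l \<in> mor G \<Longrightarrow> weight l \<le> c ^ dg G l i"
    and x: "x \<in> infpaths k G" and \<epsilon>: "0 < \<epsilon>"
  obtains N where "wyt k G y \<theta> (bseg k x N) < \<epsilon>"
proof -
  obtain M where M: "c ^ M < \<epsilon> powr \<theta>" using real_arch_pow_inv[of "\<epsilon> powr \<theta>" c] \<epsilon> decay(3) by auto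
  have "weight (bseg k x (k * M)) \<le> c ^ M"
    using decay(4)[OF bseg_mor[OF x], of "k * M"] dg_bseg[OF x] bdeg_mult[OF decay(1)] by simp
  then have "weight (bseg k x (k * M)) < \<epsilon> powr \<theta>" using M by simp
  then have "wyt k G y \<theta> (bseg k x (k * M)) < (\<epsilon> powr \<theta>) powr (1 / \<theta>)"
    unfolding wyt_eq_weight_powr using \<theta>_pos weight_pos bseg_mor x
    by (intro powr_less_mono2) (auto intro: less_imp_le)
  also have "\<dots> = \<epsilon>" using \<theta>_pos \<epsilon> by (simp add: powr_powr)
  finally show ?thesis by (rule that)
qed

lemma dyt_eq:
  assumes "x \<in> infpaths k G" "z \<in> infpaths k G"
  shows "dyt k G y \<theta> x z = (if prange x \<noteq> prange z then 1 else if x = z then 0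
                               else wyt k G y \<theta> (bseg k x (meet_len x z)))"
  using assms by (simp add: dyt_def pmeet_eq_bseg_meet_len)

lemma dyt_nonneg: "0 \<le> dyt k G y \<theta> x z"
  unfolding dyt_def wyt_def by simp

lemma dyt_commute: "dyt k G y \<theta> x z = dyt k G y \<theta> z x"
proof (cases "x \<in> infpaths k G \<and> z \<in> infpaths k G \<and> prange x = prange z \<and> x \<noteq> z")
  case True
  then have "bseg k x (meet_len x z) = bseg k z (meet_len x z)"
    using bseg_eq_iff_le_meet_len by blast
  then show ?thesis using True dyt_eq meet_len_commute[of z x] by (simp add: eq_commute)
qed (auto simp: dyt_def)

lemma dyt_ultrametric:
  assumes x: "x \<in> infpaths k G" and z: "z \<in> infpaths k G" and u: "u \<in> infpaths k G"
  shows "dyt k G y \<theta> x z \<le> max (dyt k G y \<theta> x u) (dyt k G y \<theta> u z)"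
proof (cases "x = z \<or> u = x \<or> u = z \<or> prange x \<noteq> prange z \<or> prange u \<noteq> prange x")
  case True
  then show ?thesis
    using dyt_eq[OF x z] dyt_eq[OF x u] dyt_eq[OF u z] dyt_nonneg wyt_nonneg wyt_bseg_le_1[OF x]
    by (auto simp: le_max_iff_disj)
next
  case False
  then have ne: "x \<noteq> z" "x \<noteq> u" "u \<noteq> z" and r: "prange x = prange z" "prange x = prange u"
    by auto
  define m where "m = min (meet_len x u) (meet_len u z)"
  have "bseg k x m = bseg k u m" "bseg k u m = bseg k z m"
    using bseg_eq_iff_le_meet_len[OF x u ne(2) r(2)] bseg_eq_iff_le_meet_len[OF u z ne(3)] r
    by (simp_all add: m_def)
  then have "m \<le> meet_len x z" using bseg_eq_iff_le_meet_len[OF x z ne(1) r(1)] by simp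
  then have "dyt k G y \<theta> x z \<le> wyt k G y \<theta> (bseg k x m)"
    using dyt_eq[OF x z] ne r wyt_bseg_antimono[OF x] by simp
  also have "\<dots> \<le> max (dyt k G y \<theta> x u) (dyt k G y \<theta> u z)"
    using \<open>bseg k x m = bseg k u m\<close> dyt_eq[OF x u] dyt_eq[OF u z] ne r
    by (cases "meet_len x u \<le> meet_len u z") (auto simp: m_def min_def)
  finally show ?thesis .
qed

lemma is_ultrametric_dyt: "is_ultrametric (infpaths k G) (dyt k G y \<theta>)"
proof -
  have "Metric_space (infpaths k G) (dyt k G y \<theta>)"
  proof
    show "dyt k G y \<theta> x z = 0 \<longleftrightarrow> x = z" if "x \<in> infpaths k G" "z \<in> infpaths k G" for x z
      using dyt_eq[OF that] wyt_bseg_pos[OF that(1), of "meet_len x z"] by auto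
    show "dyt k G y \<theta> x z \<le> dyt k G y \<theta> x u + dyt k G y \<theta> u z"
      if "x \<in> infpaths k G" "u \<in> infpaths k G" "z \<in> infpaths k G" for x u z
      using dyt_ultrametric[OF that(1,3,2)] dyt_nonneg[of x u] dyt_nonneg[of u z] by linarith
  qed (simp_all add: dyt_nonneg dyt_commute)
  then show ?thesis unfolding is_ultrametric_def using dyt_ultrametric by blast
qed

interpretation dyt: Metric_space "infpaths k G" "dyt k G y \<theta>"
  using is_ultrametric_dyt by (simp add: is_ultrametric_def)

lemma cylinder_bseg_subset_mball:
  assumes x: "x \<in> infpaths k G" and lt: "wyt k G y \<theta> (bseg k x N) < r"
  shows "cylinder k G (bseg k x N) \<subseteq> dyt.mball x r"
proof
  fix z assume "z \<in> cylinder k G (bseg k x N)"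
  then have z: "z \<in> infpaths k G" and eq: "bseg k z N = bseg k x N" using mem_cylinder_bseg[OF x] by auto
  have rr: "prange x = prange z" using bseg_eq_le[OF z x eq, of 0] by (simp add: bseg_0)
  have "dyt k G y \<theta> x z < r"
  proof (cases "x = z")
    case True then show ?thesis using dyt_eq[OF x z] wyt_bseg_pos[OF x, of N] lt by simp
  next
    case False
    then have "N \<le> meet_len x z" using bseg_eq_iff_le_meet_len[OF x z False rr, of N] eq by metis
    then show ?thesis using wyt_bseg_antimono[OF x] dyt_eq[OF x z] False rr lt by fastforce
  qed
  then show "z \<in> dyt.mball x r" using x z by simp
qed

lemma mball_subset_cylinder_bseg:
  assumes x: "x \<in> infpaths k G"
  shows "dyt.mball x (wyt k G y \<theta> (bseg k x N)) \<subseteq> cylinder k G (bseg k x N)"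
proof
  fix z assume "z \<in> dyt.mball x (wyt k G y \<theta> (bseg k x N))"
  then have z: "z \<in> infpaths k G" and lt: "dyt k G y \<theta> x z < wyt k G y \<theta> (bseg k x N)" by auto
  have "bseg k z N = bseg k x N"
  proof (cases "x = z")
    case False
    have rr: "prange x = prange z"
      using lt dyt_eq[OF x z] wyt_bseg_le_1[OF x, of N] by (auto split: if_splits)
    have "\<not> meet_len x z < N"
      using lt dyt_eq[OF x z] False rr wyt_bseg_antimono[OF x, of "meet_len x z" N] by auto
    then show ?thesis using bseg_eq_iff_le_meet_len[OF x z False rr, of N] by (metis not_less)
  qed simp
  then show "z \<in> cylinder k G (bseg k x N)" using mem_cylinder_bseg[OF x] z by simp
qed

lemma cylinder_openin_mtopology:
  assumes "l \<in> mor G"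
  shows "openin dyt.mtopology (cylinder k G l)"
  unfolding dyt.openin_mtopology
proof (intro conjI allI impI)
  show "cylinder k G l \<subseteq> infpaths k G" by (rule cylinder_subset_infpaths)
  fix x assume x: "x \<in> cylinder k G l"
  then obtain N where "cylinder k G (bseg k x N) \<subseteq> cylinder k G l"
    using cylinder_contains_bseg_cylinder[OF _ assms] by blast
  then show "\<exists>r>0. dyt.mball x r \<subseteq> cylinder k G l"
    using mball_subset_cylinder_bseg wyt_bseg_pos x cylinder_subset_infpaths by blast
qed

lemma openin_mtopology_union_of_cylinders:
  assumes decay: "i < k" "0 \<le> c" "c < 1" "\<And>l. l \<in> mor G \<Longrightarrow> weight l \<le> c ^ dg G l i"
    and U: "openin dyt.mtopology U"
  obtains N where "U = (\<Union>x\<in>U. cylinder k G (bseg k x (N x)))"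
proof -
  have "\<exists>N. cylinder k G (bseg k x N) \<subseteq> U" if xU: "x \<in> U" for x
  proof -
    obtain r where r: "0 < r" "dyt.mball x r \<subseteq> U" using U xU by (auto simp: dyt.openin_mtopology)
    have x: "x \<in> infpaths k G" using U xU openin_subset by fastforce
    obtain N where "wyt k G y \<theta> (bseg k x N) < r"
      using wyt_bseg_eventually_less[OF decay x r(1)] by blast
    then show ?thesis using cylinder_bseg_subset_mball[OF x] r(2) by blast
  qed
  then obtain N where N: "\<And>x. x \<in> U \<Longrightarrow> cylinder k G (bseg k x (N x)) \<subseteq> U" by metis
  then have "U = (\<Union>x\<in>U. cylinder k G (bseg k x (N x)))"
    using U openin_subset mem_cylinder_bseg by fastforce
  then show ?thesis by (rule that)
qed

lemma mtopology_eq_cylinder_topology: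
  assumes decay: "i < k" "0 \<le> c" "c < 1" "\<And>l. l \<in> mor G \<Longrightarrow> weight l \<le> c ^ dg G l i"
  shows "dyt.mtopology = cylinder_topology k G"
proof -
  let ?C = "{cylinder k G l | l. l \<in> mor G}"
  have "openin dyt.mtopology U \<longleftrightarrow> generate_topology_on ?C U" for U
  proof
    assume U: "openin dyt.mtopology U"
    then obtain N where N: "U = (\<Union>x\<in>U. cylinder k G (bseg k x (N x)))"
      using openin_mtopology_union_of_cylinders[OF decay] by blast
    have "cylinder k G (bseg k x (N x)) \<in> ?C" if "x \<in> U" for x
      using U that openin_subset bseg_mor by fastforce
    then have "generate_topology_on ?C (\<Union>x\<in>U. cylinder k G (bseg k x (N x)))"
      by (intro generate_topology_on.UN) (auto intro: generate_topology_on.Basis)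
    then show "generate_topology_on ?C U" using N by metis
  next
    assume "generate_topology_on ?C U"
    then show "openin dyt.mtopology U"
      by (induction rule: generate_topology_on.induct) (auto intro: cylinder_openin_mtopology)
  qed
  then show ?thesis unfolding cylinder_topology_def topology_eq
    by (simp add: openin_topology_generated_by_iff)
qed

end

lemma (in strongly_connected_finite_kgraph) trivial_without_vertices:
  assumes "vertices G = {}"
  shows "is_ultrametric (infpaths k G) (dyt k G y \<theta>) \<and>
    Metric_space.mtopology (infpaths k G) (dyt k G y \<theta>) = cylinder_topology k G"
proof -
  have empty: "infpaths k G = {}" using assms prange_in_vertices by blast
  interpret Metric_space "infpaths k G" "dyt k G y \<theta>"
    by unfold_locales (simp_all add: empty dyt_def)
  have "topspace mtopology = {}" by (subst topspace_mtopology) (rule empty)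
  moreover have "topspace (cylinder_topology k G) = {}"
    using empty cylinder_subset_infpaths by (auto simp: cylinder_topology_def)
  ultimately show ?thesis using Metric_space_axioms empty by (simp add: is_ultrametric_def)
qed

theorem proposition6p9:
  fixes k :: nat and G :: "'a kgraph" and y :: "'a \<Rightarrow> real" and \<theta> :: real
  assumes "is_kgraph k G"
    and "finite_kgraph k G"
    and "strongly_connected G"
    and "Rplus_functor G y"
    and "0 < \<theta>"
    and "card (vertices G) = 1 \<Longrightarrow> cond_wI k G y \<theta>"
    and "card (vertices G) \<noteq> 1 \<Longrightarrow> cond_wII k G y \<theta>"
  shows "is_ultrametric (infpaths k G) (dyt k G y \<theta>)
    \<and> Metric_space.mtopology (infpaths k G) (dyt k G y \<theta>) = cylinder_topology k G"
proof (cases "vertices G = {}")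
  case True
  interpret strongly_connected_finite_kgraph k G using assms(1-3) by unfold_locales
  show ?thesis using True by (rule trivial_without_vertices)
next
  case False
  interpret weighted_kgraph k G y \<theta> using assms(1-5) False by unfold_locales
  obtain i c where "i < k" "0 \<le> c" "c < 1" "\<And>l. l \<in> mor G \<Longrightarrow> weight l \<le> c ^ dg G l i"
    using weight_decay[OF assms(6,7)] by blast
  then show ?thesis using is_ultrametric_dyt mtopology_eq_cylinder_topology by blast
qed

end
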